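(* Let $d\in\mathbb{N}$, $I_d\subseteq\{1,\ldots,d\}$, and let $n\in\mathbb{N}$ be prime with $n\ge c_R$. Let $z_1^*\in\{1,\ldots,n-1\}$ be arbitrary, and for $\ell=2,\ldots,d$ successively choose $z_\ell^*\in\mathbb{Z}_n$ as a minimizer of $z_\ell\mapsto B_{I_d,\ell}(z_1^*,\ldots,z_{\ell-1}^*,z_\ell)$ over $z_\ell\in\mathbb{Z}_n$, where $$B_{I_d,\ell}(z_1,\ldots,z_\ell):=\sum_{\substack{\mathfrak{u}\subseteq\{1,\ldots,\ell\},\\ \ell\in\mathfrak{u}}} c_{\mathfrak{u},I_d}^{-1}\sum_{\mathbf{h}_{\mathfrak{u}}\in(\mathbb{Z}\setminus\{0\})^{\mathfrak{u}}}\frac{\mathbb{M}_{\mathfrak{u},I_d}(\mathbf{h}_{\mathfrak{u}})!}{\#\mathcal{S}_{\mathfrak{u},I_d}}\, r_{\alpha,\boldsymbol{\beta}}^{-1}(\mathbf{h}_{\mathfrak{u}})\,\mathbf{1}\{\mathbf{h}_{\mathfrak{u}}\in L(\mathbf{z}_{\mathfrak{u}},n)^{\perp}\},\qquad c_{\mathfrak{u},I_d}:=\beta_0^{\#\mathfrak{u}}\binom{\#I_d}{\#(I_d\cap\mathfrak{u})}.$$ Then there exists $\boldsymbol{\Delta}^*\in[0,1)^d$ such that the shifted rank-1 lattice rule $Q_{d,n}:=Q_{d,n}(z_1^*,\ldots,z_d^* )+\boldsymbol{\Delta}^*$ satisfies $$e^{\mathrm{wor}}(Q_{d,n};\mathfrak{S}_{I_d}(F_d(r_{\alpha,\boldsymbol{\beta}})))^2\le(1+c_R)^\lambda\,C_{d,\lambda}(r_{\alpha,\boldsymbol{\beta}})\,\max\{1,\#I_d\}\,\frac{1}{n^\lambda}\quad\text{for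 all }1\le\lambda<2\alpha,$$ where $C_{d,\lambda}(r_{\alpha,\boldsymbol{\beta}}):=\Big(\sum_{\mathbf{0}\ne\mathbf{h}\in\mathbb{Z}^d}\Big[\frac{\mathbb{M}_d(\mathbf{h})!}{\#\mathcal{S}_d}\,r_{\alpha,\boldsymbol{\beta}}^{-1}(\mathbf{h})\Big]^{1/\lambda}\Big)^\lambda$.
   Context: Standing setting. $R\colon[1,\infty)\to(0,\infty)$ is a function such that $\frac{1}{c_R}R(m)\le \frac{R(nm)}{n}\le R(m)$ for all $n,m\in\mathbb{N}$ with some constant $c_R\ge 1$, and $\mu_R(\alpha):=\sum_{m=1}^\infty R(m)^{-2\alpha}<\infty$ for the smoothness parameter $\alpha\ge 0$ (these imply $\alpha>1/2$). $\boldsymbol{\beta}=(\beta_0,\beta_1)$ are positive parameters. For a nonempty finite index set $\mathfrak{u}$ and $\mathbf{k}\in\mathbb{Z}^{\mathfrak{u}}$ put $r_{\alpha,\boldsymbol{\beta}}(\mathbf{k}):=\prod_{\ell\in\mathfrak{u}}\big(\delta_{0,k_\ell}\beta_0^{-1}+(1-\delta_{0,k_\ell})\beta_1^{-1}R(|k_\ell|)^{2\alpha}\big)$. The space $F_d(r_{\alpha,\boldsymbol{\beta}})$ consists of all $f\in L_2([0,1]^d)$ (complex valued) with $\|f\|^2:=\sum_{\mathbf{k}\in\mathbb{Z}^d}|\hat f(\mathbf{k})|^2 r_{\alpha,\boldsymbol{\beta}}(\mathbf{k})<\infty$, where $\hat f(\mathbf{k})=\int_{[0,1]^d}f(\mathbf{x})e^{-2\pi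 i\mathbf{k}\cdot\mathbf{x}}\,d\mathbf{x}$. Permutation invariance. For $I_d\subseteq\{1,\ldots,d\}$ let $\mathcal{S}_d$ be the set of bijections $P$ of $\{1,\ldots,d\}$ with $P(j)=j$ for all $j\notin I_d$, and write $P(\mathbf{x}):=(x_{P(1)},\ldots,x_{P(d)})$. The subspace $\mathfrak{S}_{I_d}(F_d(r_{\alpha,\boldsymbol{\beta}}))$ consists of all $f\in F_d(r_{\alpha,\boldsymbol{\beta}})$ with $f(\mathbf{x})=f(P(\mathbf{x}))$ for all $\mathbf{x}\in[0,1]^d$, $P\in\mathcal{S}_d$, with the same norm. For nonempty $\mathfrak{u}\subseteq\{1,\ldots,d\}$ let $\mathcal{S}_{\mathfrak{u},I_d}$ be the set of bijections $P$ of $\mathfrak{u}$ with $P(j)=j$ for $j\in\mathfrak{u}\setminus I_d$, and for $\mathbf{h}_{\mathfrak{u}}\in\mathbb{Z}^{\mathfrak{u}}$ let $\mathbb{M}_{\mathfrak{u},I_d}(\mathbf{h}_{\mathfrak{u}})!:=\#\{P\in\mathcal{S}_{\mathfrak{u},I_d}: P(\mathbf{h}_{\mathfrak{u}})=\mathbf{h}_{\mathfrak{u}}\}$; $\mathbb{M}_d(\mathbf{h})!$ denotes this quantity for $\mathfrak{u}=\{1,\ldots,d\}$. For $\mathbf{h}\in\mathbb{Z}^d$ (or $\mathbf{z}$), $\mathbf{h}_{\mathfrak{u}}=(h_j)_{j\in\mathfrak{u}}$ denotes the restriction. Lattice rules. $\mathbb{Z}_n:=\{0,\ldots,n-1\}$.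 For prime $n$ and $\mathbf{z}\in\mathbb{Z}_n^d$, the shifted rank-1 lattice rule $Q_{d,n}(\mathbf{z})+\boldsymbol{\Delta}$, $\boldsymbol{\Delta}\in[0,1)^d$, is $f\mapsto\frac1n\sum_{j=0}^{n-1}f(\{j\mathbf{z}/n+\boldsymbol{\Delta}\})$, with $\{\cdot\}$ the componentwise fractional part. For nonempty $\mathfrak{u}$, $L(\mathbf{z}_{\mathfrak{u}},n)^\perp:=\{\mathbf{h}_{\mathfrak{u}}\in\mathbb{Z}^{\mathfrak{u}}:\mathbf{h}_{\mathfrak{u}}\cdot\mathbf{z}_{\mathfrak{u}}\equiv 0\pmod n\}$. The worst case error of a cubature rule $Q$ on a normed function space $H$ is $e^{\mathrm{wor}}(Q;H):=\sup_{\|f\|_H\le1}|\int_{[0,1]^d}f-Q(f)|$. *)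

theory Defs
  imports "HOL-Analysis.Analysis" "HOL-Combinatorics.Permutations"
    "HOL-Computational_Algebra.Primes"
begin

text \<open>Vectors in Z^u, [0,1]^d etc. are extensional functions on nat, indexed by the
  coordinate set u (for dimension d: u = {1..d}).\<close>

definition ZZ :: "nat set \<Rightarrow> (nat \<Rightarrow> int) set" where
  "ZZ u = PiE u (\<lambda>_. UNIV)"

definition rfun :: "(real \<Rightarrow> real) \<Rightarrow> real \<Rightarrow> real \<Rightarrow> real \<Rightarrow> nat set \<Rightarrow> (nat \<Rightarrow> int) \<Rightarrow> real" where
  "rfun R \<alpha> \<beta>0 \<beta>1 u k =
     (\<Prod>l\<in>u. if k l = 0 then 1 / \<beta>0 else R (real_of_int \<bar>k l\<bar>) powr (2 * \<alpha>) / \<beta>1)"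

definition cube :: "nat \<Rightarrow> (nat \<Rightarrow> real) set" where
  "cube d = PiE {1..d} (\<lambda>_. {0..1})"

definition cube_measure :: "nat \<Rightarrow> (nat \<Rightarrow> real) measure" where
  "cube_measure d = PiM {1..d} (\<lambda>_. lebesgue_on {0..1})"

definition dotp :: "nat \<Rightarrow> (nat \<Rightarrow> int) \<Rightarrow> (nat \<Rightarrow> real) \<Rightarrow> real" where
  "dotp d k x = (\<Sum>j\<in>{1..d}. real_of_int (k j) * x j)"

definition fourier_coeff :: "nat \<Rightarrow> ((nat \<Rightarrow> real) \<Rightarrow> complex) \<Rightarrow> (nat \<Rightarrow> int) \<Rightarrow> complex" where
  "fourier_coeff d f k = (LINT x|cube_measure d. f x * cis (- 2 * pi * dotp d k x))"

definition Fnorm2 :: "(real \<Rightarrow> real) \<Rightarrow> real \<Rightarrow> real \<Rightarrow> real \<Rightarrow> nat \<Rightarrow> ((nat \<Rightarrow> real) \<Rightarrow> complex) \<Rightarrow> real" where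
  "Fnorm2 R \<alpha> \<beta>0 \<beta>1 d f =
     (\<Sum>\<^sub>\<infinity>k\<in>ZZ {1..d}. (cmod (fourier_coeff d f k))\<^sup>2 * rfun R \<alpha> \<beta>0 \<beta>1 {1..d} k)"

definition Fnorm :: "(real \<Rightarrow> real) \<Rightarrow> real \<Rightarrow> real \<Rightarrow> real \<Rightarrow> nat \<Rightarrow> ((nat \<Rightarrow> real) \<Rightarrow> complex) \<Rightarrow> real" where
  "Fnorm R \<alpha> \<beta>0 \<beta>1 d f = sqrt (Fnorm2 R \<alpha> \<beta>0 \<beta>1 d f)"

text \<open>Functions are identified with their (absolutely
  convergent) Fourier series on the cube, i.e. the continuous representative is used,
  so that point evaluation (cubature) is meaningful.\<close>
definition Fspace :: "(real \<Rightarrow> real) \<Rightarrow> real \<Rightarrow> real \<Rightarrow> real \<Rightarrow> nat \<Rightarrow> ((nat \<Rightarrow> real) \<Rightarrow> complex) set" where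
  "Fspace R \<alpha> \<beta>0 \<beta>1 d = {f.
      f \<in> borel_measurable (cube_measure d) \<and>
      integrable (cube_measure d) (\<lambda>x. (cmod (f x))\<^sup>2) \<and>
      (\<lambda>k. (cmod (fourier_coeff d f k))\<^sup>2 * rfun R \<alpha> \<beta>0 \<beta>1 {1..d} k) summable_on ZZ {1..d} \<and>
      (\<forall>x\<in>cube d. f x = (\<Sum>\<^sub>\<infinity>k\<in>ZZ {1..d}. fourier_coeff d f k * cis (2 * pi * dotp d k x)))}"

text \<open>S_{u,I_d}: bijections of u fixing u - I_d (as functions on nat fixing everything else)\<close>
definition Sset :: "nat set \<Rightarrow> nat set \<Rightarrow> (nat \<Rightarrow> nat) set" where
  "Sset u I = {P. P permutes (u \<inter> I)}"

definition Mfact :: "nat set \<Rightarrow> nat set \<Rightarrow> (nat \<Rightarrow> int) \<Rightarrow> nat" where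
  "Mfact u I h = card {P \<in> Sset u I. \<forall>j\<in>u. h (P j) = h j}"

definition SymSpace :: "(real \<Rightarrow> real) \<Rightarrow> real \<Rightarrow> real \<Rightarrow> real \<Rightarrow> nat \<Rightarrow> nat set \<Rightarrow> ((nat \<Rightarrow> real) \<Rightarrow> complex) set" where
  "SymSpace R \<alpha> \<beta>0 \<beta>1 d I = {f \<in> Fspace R \<alpha> \<beta>0 \<beta>1 d.
      \<forall>x\<in>cube d. \<forall>P\<in>Sset {1..d} I. f x = f (\<lambda>j. x (P j))}"

definition lattice_rule :: "nat \<Rightarrow> nat \<Rightarrow> (nat \<Rightarrow> int) \<Rightarrow> (nat \<Rightarrow> real) \<Rightarrow> ((nat \<Rightarrow> real) \<Rightarrow> complex) \<Rightarrow> complex" where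
  "lattice_rule d n z \<Delta> f = of_real (1 / real n) *
     (\<Sum>j<n. f (\<lambda>i. if i \<in> {1..d} then frac (real j * real_of_int (z i) / real n + \<Delta> i) else undefined))"

definition wce :: "((nat \<Rightarrow> real) \<Rightarrow> complex) set \<Rightarrow> (((nat \<Rightarrow> real) \<Rightarrow> complex) \<Rightarrow> real)
     \<Rightarrow> (((nat \<Rightarrow> real) \<Rightarrow> complex) \<Rightarrow> complex) \<Rightarrow> (((nat \<Rightarrow> real) \<Rightarrow> complex) \<Rightarrow> complex) \<Rightarrow> ereal" where
  "wce H nrm Iexact Q = (SUP f\<in>{f\<in>H. nrm f \<le> 1}. ereal (cmod (Iexact f - Q f)))"

definition cfac :: "real \<Rightarrow> nat set \<Rightarrow> nat set \<Rightarrow> real" where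
  "cfac \<beta>0 I u = \<beta>0 ^ card u * real (card I choose card (I \<inter> u))"

definition Bfun :: "(real \<Rightarrow> real) \<Rightarrow> real \<Rightarrow> real \<Rightarrow> real \<Rightarrow> nat set \<Rightarrow> nat \<Rightarrow> nat \<Rightarrow> (nat \<Rightarrow> int) \<Rightarrow> real" where
  "Bfun R \<alpha> \<beta>0 \<beta>1 I n l z =
     (\<Sum>u\<in>{u. u \<subseteq> {1..l} \<and> l \<in> u}. (1 / cfac \<beta>0 I u) *
        (\<Sum>\<^sub>\<infinity>h\<in>PiE u (\<lambda>_. - {0}).
           real (Mfact u I h) / real (card (Sset u I)) * (1 / rfun R \<alpha> \<beta>0 \<beta>1 u h) *
           (if (\<Sum>j\<in>u. h j * z j) mod int n = 0 then 1 else 0)))"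

definition Cdl :: "(real \<Rightarrow> real) \<Rightarrow> real \<Rightarrow> real \<Rightarrow> real \<Rightarrow> nat \<Rightarrow> nat set \<Rightarrow> real \<Rightarrow> real" where
  "Cdl R \<alpha> \<beta>0 \<beta>1 d I lam =
     (\<Sum>\<^sub>\<infinity>h\<in>ZZ {1..d} - {restrict (\<lambda>_. 0) {1..d}}.
        (real (Mfact {1..d} I h) / real (card (Sset {1..d} I)) / rfun R \<alpha> \<beta>0 \<beta>1 {1..d} h)
          powr (1 / lam)) powr lam"

end

theory Submission
  imports Defs
begin

text \<open>
  Let tau(h) = M(h)!/#S * r(h)^-1. For f in the symmetric space, averaging f over the
  permutations in S and summing its Fourier series along the lattice shows that the integration
  error of the shifted rule is the sum over h \<noteq> 0 of f^(h) a_h(Delta), where a_h(Delta) averages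
  exp(2 pi i (h o P).Delta) over those P in S for which h o P lies in the dual lattice. By
  Cauchy--Schwarz the squared worst case error is at most G(Delta), the sum of |a_h(Delta)|^2 / r(h),
  and by orthogonality of the characters the mean of G over all shifts is
  S(z) = sum over h \<noteq> 0 of tau(h) [n | h.z]; hence some shift has G(Delta) \<le> S(z).

  Grouping h by its support u and the largest index l of u gives S(z) = beta0^d sum_l B_l(z).
  For p = 1/lambda, subadditivity of t^p and the minimality of z_l bound B_l(z)^p by its average
  over the n choices of z_l. For a fixed h with n not dividing h_l, at most one choice puts h into
  the dual lattice because n is prime; the terms with n | h_l are controlled by the scaling
  property of R, at the cost of the factor max{1,#I} by which the stabiliser count M(h)! can grow
  when one entry of h changes.
\<close>

section \<open>Unconditional sums\<close>

lemma summable_on_divide_const: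
  fixes f :: "'a \<Rightarrow> real"
  shows "f summable_on A \<Longrightarrow> (\<lambda>x. f x / c) summable_on A"
  by (simp add: divide_inverse summable_on_cmult_left)

lemma infsum_divide_const:
  fixes f :: "'a \<Rightarrow> real"
  shows "infsum (\<lambda>x. f x / c) A = infsum f A / c"
  by (simp add: divide_inverse infsum_cmult_left')

lemma summable_on_sum:
  fixes f :: "'i \<Rightarrow> 'a \<Rightarrow> 'b::topological_comm_monoid_add"
  assumes "finite I" "\<And>i. i \<in> I \<Longrightarrow> f i summable_on A"
  shows "(\<lambda>x. \<Sum>i\<in>I. f i x) summable_on A"
  using assms by (induction I rule: finite_induct) (auto intro!: summable_on_add)

lemma infsum_sum:
  fixes f :: "'i \<Rightarrow> 'a \<Rightarrow> 'b::{topological_comm_monoid_add, t2_space}"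
  assumes "finite I" "\<And>i. i \<in> I \<Longrightarrow> f i summable_on A"
  shows "infsum (\<lambda>x. \<Sum>i\<in>I. f i x) A = (\<Sum>i\<in>I. infsum (f i) A)"
  using assms
proof (induction I rule: finite_induct)
  case (insert i I)
  have "infsum (\<lambda>x. \<Sum>i\<in>insert i I. f i x) A = infsum (\<lambda>x. f i x + (\<Sum>i\<in>I. f i x)) A"
    using insert by simp
  also have "\<dots> = infsum (f i) A + infsum (\<lambda>x. \<Sum>i\<in>I. f i x) A"
    by (rule infsum_add) (use insert in \<open>auto intro!: summable_on_sum\<close>)
  finally show ?case using insert by simp
qed simp

lemma summable_on_prod_PiE_nonneg:
  fixes w :: "'a \<Rightarrow> 'b \<Rightarrow> real"
  assumes A: "finite A" and nn: "\<And>x y. x \<in> A \<Longrightarrow> 0 \<le> w x y"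
    and sm: "\<And>x. x \<in> A \<Longrightarrow> w x summable_on B x"
  shows "(\<lambda>g. \<Prod>x\<in>A. w x (g x)) summable_on PiE A B"
proof (rule nonneg_bdd_above_summable_on)
  show "\<And>g. g \<in> PiE A B \<Longrightarrow> 0 \<le> (\<Prod>x\<in>A. w x (g x))" using nn by (simp add: prod_nonneg)
  show "bdd_above (sum (\<lambda>g. \<Prod>x\<in>A. w x (g x)) ` {F. F \<subseteq> PiE A B \<and> finite F})"
  proof (rule bdd_aboveI2)
    fix F assume "F \<in> {F. F \<subseteq> PiE A B \<and> finite F}"
    hence F: "F \<subseteq> PiE A B" "finite F" by auto
    define C where "C x = (\<lambda>g. g x) ` F" for x
    have FC: "F \<subseteq> PiE A C" using F by (auto simp: C_def PiE_def Pi_def)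
    have CB: "C x \<subseteq> B x" if "x \<in> A" for x using F that by (auto simp: C_def PiE_def Pi_def)
    have finC: "finite (C x)" for x using F by (simp add: C_def)
    have "sum (\<lambda>g. \<Prod>x\<in>A. w x (g x)) F \<le> sum (\<lambda>g. \<Prod>x\<in>A. w x (g x)) (PiE A C)"
      by (rule sum_mono2) (use FC A finC nn in \<open>auto intro!: finite_PiE prod_nonneg\<close>)
    also have "\<dots> = (\<Prod>x\<in>A. \<Sum>y\<in>C x. w x y)" by (rule prod_sum_PiE[symmetric]) (use A finC in auto)
    also have "\<dots> \<le> (\<Prod>x\<in>A. infsum (w x) (B x))"
    proof (rule prod_mono)
      fix x assume x: "x \<in> A"
      have "0 \<le> sum (w x) (C x)" using nn x by (auto intro: sum_nonneg)
      moreover have "sum (w x) (C x) \<le> infsum (w x) (B x)"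
        by (rule finite_sum_le_infsum) (use sm x CB[OF x] finC nn in auto)
      ultimately show "0 \<le> sum (w x) (C x) \<and> sum (w x) (C x) \<le> infsum (w x) (B x)" by simp
    qed
    finally show "sum (\<lambda>g. \<Prod>x\<in>A. w x (g x)) F \<le> (\<Prod>x\<in>A. infsum (w x) (B x))" .
  qed
qed

lemma summable_on_nonzero_int:
  fixes g :: "nat \<Rightarrow> real"
  assumes nn: "\<And>m. 0 \<le> g m" and sm: "summable (\<lambda>m. g (Suc m))"
  shows "(\<lambda>k::int. g (nat \<bar>k\<bar>)) summable_on (- {0})"
proof -
  have eq: "- {0::int} = (\<lambda>m. int (Suc m)) ` UNIV \<union> (\<lambda>m. - int (Suc m)) ` UNIV"
  proof (intro equalityI subsetI)
    fix x :: int assume "x \<in> - {0}"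
    hence x: "x \<noteq> 0" by simp
    show "x \<in> (\<lambda>m. int (Suc m)) ` UNIV \<union> (\<lambda>m. - int (Suc m)) ` UNIV"
    proof (cases "x > 0")
      case True
      hence "x = int (Suc (nat x - 1))" by simp
      thus ?thesis by blast
    next
      case False
      hence "x = - int (Suc (nat (- x) - 1))" using x by simp
      thus ?thesis by blast
    qed
  qed auto
  have eq1: "((\<lambda>k::int. g (nat \<bar>k\<bar>)) \<circ> (\<lambda>m. int (Suc m))) = (\<lambda>m. g (Suc m))"
    by (auto simp: fun_eq_iff simp del: of_nat_Suc)
  have s1: "(\<lambda>k::int. g (nat \<bar>k\<bar>)) summable_on (\<lambda>m. int (Suc m)) ` UNIV"
    by (subst summable_on_reindex)
       (use nn sm in \<open>auto simp: inj_on_def eq1 summable_on_UNIV_nonneg_real_iff simp del: of_nat_Suc\<close>)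
  have eq2: "((\<lambda>k::int. g (nat \<bar>k\<bar>)) \<circ> (\<lambda>m. - int (Suc m))) = (\<lambda>m. g (Suc m))"
    by (auto simp: fun_eq_iff nat_add_distrib)
  have s2: "(\<lambda>k::int. g (nat \<bar>k\<bar>)) summable_on (\<lambda>m. - int (Suc m)) ` UNIV"
    by (subst summable_on_reindex)
       (use nn sm in \<open>auto simp: inj_on_def eq2 summable_on_UNIV_nonneg_real_iff simp del: of_nat_Suc\<close>)
  show ?thesis unfolding eq by (rule summable_on_union[OF s1 s2])
qed

lemma infsum_le_infsum_powr:
  fixes a :: "'a \<Rightarrow> real"
  assumes p: "0 < p" "p \<le> 1" and a: "\<And>x. x \<in> A \<Longrightarrow> 0 \<le> a x \<and> a x \<le> 1"
    and sa: "a summable_on A" and sp: "(\<lambda>x. a x powr p) summable_on A"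
  shows "infsum a A \<le> infsum (\<lambda>x. a x powr p) A"
proof (rule infsum_mono[OF sa sp])
  fix x assume x: "x \<in> A"
  have "a x = a x powr 1" using a[OF x] by simp
  also have "\<dots> \<le> a x powr p" by (rule powr_mono') (use p a[OF x] in auto)
  finally show "a x \<le> a x powr p" .
qed

lemma infsum_powr_le:
  fixes a :: "'a \<Rightarrow> real"
  assumes p: "0 < p" "p \<le> 1" and nn: "\<And>x. x \<in> A \<Longrightarrow> 0 \<le> a x"
    and sa: "a summable_on A" and sp: "(\<lambda>x. a x powr p) summable_on A"
  shows "(infsum a A) powr p \<le> infsum (\<lambda>x. a x powr p) A"
proof -
  define T where "T = infsum (\<lambda>x. a x powr p) A"
  have T0: "0 \<le> T" unfolding T_def by (rule infsum_nonneg) auto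
  have single: "a x powr p \<le> T" if "x \<in> A" for x
  proof -
    have "sum (\<lambda>x. a x powr p) {x} \<le> T" unfolding T_def
      by (rule finite_sum_le_infsum) (use sp that in auto)
    thus ?thesis by simp
  qed
  show ?thesis
  proof (cases "T = 0")
    case True
    hence "a x = 0" if "x \<in> A" for x using single[OF that] nn[OF that]
      by (metis order.antisym powr_ge_zero powr_eq_0_iff)
    hence "infsum a A = 0" by (simp add: infsum_0)
    thus ?thesis using T0 True T_def by simp
  next
    case False
    hence Tp: "T > 0" using T0 by simp
    txt \<open>Normalise by \<open>c = T powr (1/p)\<close>, so that every \<open>a x / c\<close> lies in \<open>[0,1]\<close>.\<close>
    define c where "c = T powr (1/p)"
    have cp: "c > 0" using Tp by (simp add: c_def)
    have cpp: "c powr p = T" using Tp p by (simp add: c_def powr_powr)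
    have le_c: "a x \<le> c" if "x \<in> A" for x
    proof -
      have "a x = (a x powr p) powr (1/p)" using nn[OF that] p by (simp add: powr_powr)
      also have "\<dots> \<le> T powr (1/p)" using single[OF that] p by (intro powr_mono2) auto
      finally show ?thesis by (simp add: c_def)
    qed
    have "infsum (\<lambda>x. a x / c) A \<le> infsum (\<lambda>x. (a x / c) powr p) A"
    proof (rule infsum_le_infsum_powr[OF p])
      show "(\<lambda>x. a x / c) summable_on A" using sa by (rule summable_on_divide_const)
      show "(\<lambda>x. (a x / c) powr p) summable_on A"
        using sp cp nn by (simp add: powr_divide summable_on_divide_const)
    qed (use nn cp le_c in auto)
    also have "infsum (\<lambda>x. (a x / c) powr p) A = infsum (\<lambda>x. a x powr p) A / c powr p"
      using nn cp by (subst infsum_cong[where g="\<lambda>x. a x powr p / c powr p"])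
         (auto simp: powr_divide infsum_divide_const)
    also have "\<dots> = 1" using cpp Tp T_def by simp
    finally have "infsum a A / c \<le> 1" by (simp add: infsum_divide_const)
    hence "infsum a A \<le> c" using cp by (simp add: divide_le_eq)
    moreover have "0 \<le> infsum a A" by (rule infsum_nonneg) (use nn in auto)
    ultimately have "(infsum a A) powr p \<le> c powr p" using p by (intro powr_mono2) auto
    thus ?thesis using cpp T_def by simp
  qed
qed

lemma sum_powr_le:
  fixes a :: "'a \<Rightarrow> real"
  assumes p: "0 < p" "p \<le> 1" and nn: "\<And>x. x \<in> A \<Longrightarrow> 0 \<le> a x" and A: "finite A"
  shows "(sum a A) powr p \<le> sum (\<lambda>x. a x powr p) A"
  using infsum_powr_le[OF p, of A a] nn A by simp

lemma summable_on_mult_of_squares: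
  fixes x y :: "'a \<Rightarrow> real"
  assumes nx: "\<And>k. 0 \<le> x k" and ny: "\<And>k. 0 \<le> y k"
    and sx: "(\<lambda>k. (x k)\<^sup>2) summable_on A" and sy: "(\<lambda>k. (y k)\<^sup>2) summable_on A"
  shows "(\<lambda>k. x k * y k) summable_on A"
proof (rule summable_on_comparison_test)
  show "(\<lambda>k. ((x k)\<^sup>2 + (y k)\<^sup>2) / 2) summable_on A"
    by (intro summable_on_divide_const summable_on_add sx sy)
  fix k
  show "0 \<le> x k * y k" using nx ny by simp
  have "0 \<le> (x k - y k)\<^sup>2" by simp
  thus "x k * y k \<le> ((x k)\<^sup>2 + (y k)\<^sup>2) / 2" by (simp add: power2_eq_square algebra_simps)
qed

lemma infsum_mult_le_sqrt:
  fixes x y :: "'a \<Rightarrow> real"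
  assumes nx: "\<And>k. 0 \<le> x k" and ny: "\<And>k. 0 \<le> y k"
    and sx: "(\<lambda>k. (x k)\<^sup>2) summable_on A" and sy: "(\<lambda>k. (y k)\<^sup>2) summable_on A"
  shows "infsum (\<lambda>k. x k * y k) A \<le> sqrt (infsum (\<lambda>k. (x k)\<^sup>2) A) * sqrt (infsum (\<lambda>k. (y k)\<^sup>2) A)"
proof (rule infsum_le_finite_sums[OF summable_on_mult_of_squares[OF assms]])
  fix F assume F: "finite F" "F \<subseteq> A"
  have "(\<Sum>k\<in>F. x k * y k) = (\<Sum>k\<in>F. \<bar>x k\<bar> * \<bar>y k\<bar>)" using nx ny by simp
  also have "\<dots> \<le> L2_set x F * L2_set y F" by (rule L2_set_mult_ineq)
  also have "\<dots> \<le> sqrt (infsum (\<lambda>k. (x k)\<^sup>2) A) * sqrt (infsum (\<lambda>k. (y k)\<^sup>2) A)"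
  proof (rule mult_mono)
    show "L2_set x F \<le> sqrt (infsum (\<lambda>k. (x k)\<^sup>2) A)"
      unfolding L2_set_def by (rule real_sqrt_le_mono, rule finite_sum_le_infsum[OF sx F]) simp
    show "L2_set y F \<le> sqrt (infsum (\<lambda>k. (y k)\<^sup>2) A)"
      unfolding L2_set_def by (rule real_sqrt_le_mono, rule finite_sum_le_infsum[OF sy F]) simp
  qed (simp_all add: L2_set_def infsum_nonneg sum_nonneg)
  finally show "(\<Sum>k\<in>F. x k * y k) \<le> sqrt (infsum (\<lambda>k. (x k)\<^sup>2) A) * sqrt (infsum (\<lambda>k. (y k)\<^sup>2) A)" .
qed

lemma le_amgm_inverse:
  fixes x r :: real
  assumes r: "r > 0"
  shows "x \<le> (x\<^sup>2 * r + 1 / r) / 2"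
proof -
  have "0 \<le> (x * r - 1)\<^sup>2 / r" using r by simp
  also have "(x * r - 1)\<^sup>2 / r = x\<^sup>2 * r + 1 / r - 2 * x" using r by (simp add: power2_eq_square field_simps)
  finally show ?thesis by simp
qed

section \<open>Stabilisers of integer vectors\<close>

definition stabilizer :: "nat set \<Rightarrow> nat set \<Rightarrow> (nat \<Rightarrow> int) \<Rightarrow> (nat \<Rightarrow> nat) set" where
  "stabilizer u I h = {P \<in> Sset u I. \<forall>j\<in>u. h (P j) = h j}"

lemma Mfact_eq_card_stabilizer: "Mfact u I h = card (stabilizer u I h)"
  by (simp add: Mfact_def stabilizer_def)

lemma finite_Sset: "finite u \<Longrightarrow> finite (Sset u I)"
  unfolding Sset_def by (rule finite_permutations) simp

lemma card_Sset: "finite u \<Longrightarrow> card (Sset u I) = fact (card (u \<inter> I))"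
  unfolding Sset_def by (rule card_permutations) auto

lemma Sset_closed: "P \<in> Sset u I \<Longrightarrow> j \<in> u \<Longrightarrow> P j \<in> u"
  unfolding Sset_def by (metis IntD1 permutes_in_image permutes_not_in mem_Collect_eq)

lemma stabilizer_cong:
  assumes "\<And>j. j \<in> u \<Longrightarrow> h j = h' j"
  shows "stabilizer u I h = stabilizer u I h'"
  unfolding stabilizer_def using assms Sset_closed by (auto; metis)

lemma Mfact_le_card_Sset: "finite u \<Longrightarrow> Mfact u I h \<le> card (Sset u I)"
  unfolding Mfact_eq_card_stabilizer stabilizer_def by (rule card_mono[OF finite_Sset]) auto

lemma permutes_in_imageI: "P permutes S \<Longrightarrow> x \<in> S \<Longrightarrow> P x \<in> S"
  by (simp add: permutes_in_image)

lemma permutes_restrict_invariant: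
  assumes P: "P permutes S" and fin: "finite S" and T: "T \<subseteq> S" and PT: "\<And>x. x \<in> T \<Longrightarrow> P x \<in> T"
  shows "(\<lambda>j. if j \<in> T then P j else j) permutes T"
proof (rule bij_imp_permutes)
  have inj: "inj_on P T" using P T by (meson inj_on_subset permutes_inj_on)
  have "P ` T = T" by (rule endo_inj_surj) (use fin T PT inj in \<open>auto intro: finite_subset\<close>)
  hence "bij_betw P T T" using inj by (simp add: bij_betw_def)
  thus "bij_betw (\<lambda>j. if j \<in> T then P j else j) T T"
    by (rule bij_betw_cong[THEN iffD1, rotated]) auto
qed auto

lemma permutes_split_invariant:
  assumes P: "P permutes S" and fin: "finite S" and T: "T \<subseteq> S" and PT: "\<And>x. x \<in> T \<Longrightarrow> P x \<in> T"
  shows "\<exists>P1 P2. P1 permutes T \<and> P2 permutes (S - T) \<and> P = P1 \<circ> P2"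
proof -
  have PTT: "P ` T = T"
    by (rule endo_inj_surj) (use fin T PT permutes_inj_on[OF P] in \<open>auto intro: finite_subset\<close>)
  have PST: "P x \<in> S - T" if x: "x \<in> S - T" for x
  proof -
    have "P x \<notin> T"
    proof
      assume "P x \<in> T"
      then obtain y where "y \<in> T" "P x = P y" using PTT by blast
      thus False using x permutes_inj[OF P] by (auto dest: injD)
    qed
    thus ?thesis using P x by (simp add: permutes_in_image)
  qed
  define P1 where "P1 = (\<lambda>j. if j \<in> T then P j else j)"
  define P2 where "P2 = (\<lambda>j. if j \<in> S - T then P j else j)"
  have "P1 permutes T" unfolding P1_def by (rule permutes_restrict_invariant[OF P fin T PT])
  moreover have "P2 permutes (S - T)" unfolding P2_def by (rule permutes_restrict_invariant[OF P fin]) (use PST in auto)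
  moreover have "P = P1 \<circ> P2"
  proof
    fix j show "P j = (P1 \<circ> P2) j"
      using PST[of j] P by (auto simp: P1_def P2_def permutes_not_in)
  qed
  ultimately show ?thesis by blast
qed

lemma permutes_comp_disjoint_cancel:
  assumes P: "P permutes S" and Q: "Q permutes T" and P': "P' permutes S" and Q': "Q' permutes T"
    and ST: "S \<inter> T = {}" and eq: "P \<circ> Q = P' \<circ> Q'"
  shows "P = P' \<and> Q = Q'"
proof
  have eq': "P (Q j) = P' (Q' j)" for j using fun_cong[OF eq, of j] by simp
  show "P = P'"
  proof
    fix j show "P j = P' j"
    proof (cases "j \<in> S")
      case True
      hence "j \<notin> T" using ST by blast
      hence "Q j = j" "Q' j = j" using Q Q' by (simp_all add: permutes_not_in)
      thus ?thesis using eq'[of j] by simp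
    qed (use P P' in \<open>simp add: permutes_not_in\<close>)
  qed
  show "Q = Q'"
  proof
    fix j show "Q j = Q' j"
    proof (cases "j \<in> T")
      case True
      hence "Q j \<in> T" "Q' j \<in> T" using Q Q' by (auto simp: permutes_in_image)
      hence "Q j \<notin> S" "Q' j \<notin> S" using ST by blast+
      hence "P (Q j) = Q j" "P' (Q' j) = Q' j" using P P' by (simp_all add: permutes_not_in)
      thus ?thesis using eq'[of j] by simp
    qed (use Q Q' in \<open>simp add: permutes_not_in\<close>)
  qed
qed

lemma comp_mem_stabilizer:
  fixes g :: "nat \<Rightarrow> int"
  assumes ID: "I \<subseteq> D" and gD: "\<And>j. j \<in> D - u \<Longrightarrow> g j = 0"
    and P: "P \<in> stabilizer u I g" and Q: "Q permutes (I - u)"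
  shows "P \<circ> Q \<in> stabilizer D I g"
proof -
  have P': "P permutes (u \<inter> I)" and Pg: "\<forall>j\<in>u. g (P j) = g j"
    using P by (auto simp: stabilizer_def Sset_def)
  have "P \<circ> Q permutes I"
    by (rule permutes_compose) (use Q P' in \<open>auto intro: permutes_subset\<close>)
  moreover have "g (P (Q j)) = g j" if j: "j \<in> D" for j
  proof (cases "j \<in> u")
    case True
    hence "Q j = j" using Q by (auto simp: permutes_not_in)
    thus ?thesis using Pg True by simp
  next
    case False
    have "Q j \<notin> u \<and> Q j \<in> D"
    proof (cases "j \<in> I - u")
      case True
      hence "Q j \<in> I - u" using permutes_in_image[OF Q] by blast
      thus ?thesis using ID by auto
    qed (use Q False j in \<open>simp add: permutes_not_in\<close>)
    moreover from this have "P (Q j) = Q j" using P' by (simp add: permutes_not_in)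
    ultimately show ?thesis using gD False j by simp
  qed
  ultimately show ?thesis using ID by (auto simp: stabilizer_def Sset_def Int_absorb1)
qed

lemma stabilizer_decompose:
  fixes g :: "nat \<Rightarrow> int"
  assumes finD: "finite D" and uD: "u \<subseteq> D" and ID: "I \<subseteq> D"
    and gu: "\<And>j. j \<in> u \<Longrightarrow> g j \<noteq> 0" and gD: "\<And>j. j \<in> D - u \<Longrightarrow> g j = 0"
    and P: "P \<in> stabilizer D I g"
  shows "\<exists>P1 Q. P1 \<in> stabilizer u I g \<and> Q permutes (I - u) \<and> P = P1 \<circ> Q"
proof -
  have finI: "finite I" using finD ID finite_subset by blast
  have P': "P permutes I" and Pg: "\<forall>j\<in>D. g (P j) = g j"
    using P ID by (auto simp: stabilizer_def Sset_def Int_absorb1)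
  txt \<open>\<open>P\<close> preserves the support \<open>u\<close> of \<open>g\<close>.\<close>
  have "P j \<in> u \<inter> I" if "j \<in> u \<inter> I" for j
    using that Pg gu gD ID uD P' by (metis DiffI IntD1 IntD2 IntI permutes_in_image subsetD)
  then obtain P1 Q where P1: "P1 permutes (u \<inter> I)" and Q: "Q permutes (I - (u \<inter> I))"
    and PP: "P = P1 \<circ> Q"
    using permutes_split_invariant[OF P' finI, of "u \<inter> I"] by blast
  have "g (P1 j) = g j" if "j \<in> u" for j
  proof (cases "j \<in> I")
    case True
    have "Q j = j" using Q that by (simp add: permutes_not_in)
    thus ?thesis using Pg PP that uD by (metis comp_apply subsetD)
  qed (use P1 in \<open>simp add: permutes_not_in\<close>)
  moreover have "I - (u \<inter> I) = I - u" by blast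
  ultimately show ?thesis using P1 Q PP by (auto simp: stabilizer_def Sset_def)
qed

lemma card_stabilizer_split:
  fixes g :: "nat \<Rightarrow> int"
  assumes finD: "finite D" and uD: "u \<subseteq> D" and ID: "I \<subseteq> D"
    and gu: "\<And>j. j \<in> u \<Longrightarrow> g j \<noteq> 0" and gD: "\<And>j. j \<in> D - u \<Longrightarrow> g j = 0"
  shows "card (stabilizer D I g) = card (stabilizer u I g) * fact (card (I - u))"
proof -
  define B where "B = {Q. Q permutes (I - u)}"
  have "bij_betw (\<lambda>(P, Q). P \<circ> Q) (stabilizer u I g \<times> B) (stabilizer D I g)"
  proof (rule bij_betwI')
    fix x y assume x: "x \<in> stabilizer u I g \<times> B" and y: "y \<in> stabilizer u I g \<times> B"
    obtain P Q P' Q' where xy: "x = (P, Q)" "y = (P', Q')" by (cases x, cases y)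
    have "P permutes (u \<inter> I)" "Q permutes (I - u)" "P' permutes (u \<inter> I)" "Q' permutes (I - u)"
      using x y xy by (auto simp: stabilizer_def Sset_def B_def)
    from permutes_comp_disjoint_cancel[OF this]
    show "((\<lambda>(P, Q). P \<circ> Q) x = (\<lambda>(P, Q). P \<circ> Q) y) = (x = y)" using xy by auto
  next
    fix x assume "x \<in> stabilizer u I g \<times> B"
    thus "(\<lambda>(P, Q). P \<circ> Q) x \<in> stabilizer D I g"
      using comp_mem_stabilizer[OF ID gD] by (auto simp: B_def)
  next
    fix P assume "P \<in> stabilizer D I g"
    thus "\<exists>x\<in>stabilizer u I g \<times> B. P = (\<lambda>(P, Q). P \<circ> Q) x"
      using stabilizer_decompose[OF finD uD ID gu gD] by (fastforce simp: B_def)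
  qed
  hence "card (stabilizer D I g) = card (stabilizer u I g \<times> B)" by (simp add: bij_betw_same_card)
  also have "\<dots> = card (stabilizer u I g) * card B" by (simp add: card_cartesian_product)
  also have "card B = fact (card (I - u))"
    unfolding B_def by (rule card_permutations) (use finD ID finite_subset in auto)
  finally show ?thesis .
qed

lemma stabilizer_fun_upd_fixing_subset:
  "{P \<in> stabilizer u I (h(l := c)). P l = l} \<subseteq> stabilizer u I h"
proof
  fix P assume P: "P \<in> {P \<in> stabilizer u I (h(l := c)). P l = l}"
  hence PS: "P \<in> Sset u I" and Pl: "P l = l" and Ph: "\<forall>j\<in>u. (h(l := c)) (P j) = (h(l := c)) j"
    by (auto simp: stabilizer_def)
  have inj: "inj P" using PS by (auto simp: Sset_def permutes_inj)
  have "h (P j) = h j" if "j \<in> u" for j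
  proof (cases "j = l")
    case False
    hence "P j \<noteq> l" using inj Pl by (metis injD)
    thus ?thesis using Ph that False by fastforce
  qed (use Pl in simp)
  thus "P \<in> stabilizer u I h" using PS by (simp add: stabilizer_def)
qed

lemma card_stabilizer_fiber_le:
  assumes u: "finite u"
  shows "card {P \<in> stabilizer u I g. P l = k} \<le> card {P \<in> stabilizer u I g. P l = l}"
proof (cases "{P \<in> stabilizer u I g. P l = k} = {}")
  case True
  thus ?thesis by (metis card.empty zero_le)
next
  case False
  then obtain P0 where "P0 \<in> stabilizer u I g" and P0l: "P0 l = k" by blast
  hence P0S: "P0 permutes (u \<inter> I)" and P0g: "\<forall>j\<in>u. g (P0 j) = g j"
    by (auto simp: stabilizer_def Sset_def)
  have "inj_on (\<lambda>P. inv P0 \<circ> P) {P \<in> stabilizer u I g. P l = k}"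
  proof (rule inj_onI)
    fix P P' assume "inv P0 \<circ> P = inv P0 \<circ> P'"
    hence "P0 \<circ> (inv P0 \<circ> P) = P0 \<circ> (inv P0 \<circ> P')" by simp
    thus "P = P'" using permutes_inverses(1)[OF P0S] by (simp add: fun_eq_iff)
  qed
  moreover have "(\<lambda>P. inv P0 \<circ> P) ` {P \<in> stabilizer u I g. P l = k} \<subseteq> {P \<in> stabilizer u I g. P l = l}"
  proof
    fix Q assume "Q \<in> (\<lambda>P. inv P0 \<circ> P) ` {P \<in> stabilizer u I g. P l = k}"
    then obtain P where P: "P \<in> Sset u I" "\<forall>j\<in>u. g (P j) = g j" "P l = k" and Qe: "Q = inv P0 \<circ> P"
      by (auto simp: stabilizer_def)
    have QS: "Q permutes (u \<inter> I)" unfolding Qe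
      using P(1) by (auto simp: Sset_def intro: permutes_compose permutes_inv[OF P0S])
    have "g (Q j) = g j" if j: "j \<in> u" for j
    proof -
      have "inv P0 \<in> Sset u I" using permutes_inv[OF P0S] by (simp add: Sset_def)
      hence x: "inv P0 (P j) \<in> u" using Sset_closed[OF P(1) j] Sset_closed by blast
      have "g (Q j) = g (P0 (inv P0 (P j)))" using x P0g by (simp add: Qe)
      also have "\<dots> = g j" using permutes_inverses(1)[OF P0S] P(2) j by simp
      finally show ?thesis .
    qed
    moreover have "Q l = l" using Qe P(3) P0l permutes_inverses(2)[OF P0S, of l] by simp
    ultimately show "Q \<in> {P \<in> stabilizer u I g. P l = l}" using QS by (auto simp: stabilizer_def Sset_def)
  qed
  moreover have "finite {P \<in> stabilizer u I g. P l = l}"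
    using finite_Sset[OF u] by (auto simp: stabilizer_def)
  ultimately show ?thesis by (rule card_inj_on_le)
qed

lemma Mfact_fun_upd_le:
  assumes u: "finite u" and finI: "finite I" and l: "l \<in> u"
  shows "Mfact u I (h(l := c)) \<le> max 1 (card I) * Mfact u I h"
proof -
  define St' where "St' = stabilizer u I (h(l := c))"
  define S0 where "S0 = {P \<in> St'. P l = l}"
  have finSt: "finite (stabilizer u I h)" "finite St'"
    using finite_Sset[OF u] by (auto simp: stabilizer_def St'_def)
  have cS0: "card S0 \<le> card (stabilizer u I h)"
    unfolding S0_def St'_def by (rule card_mono[OF finSt(1) stabilizer_fun_upd_fixing_subset])
  have "card St' \<le> max 1 (card I) * card S0"
  proof (cases "l \<in> I")
    case False
    hence "St' = S0" by (auto simp: St'_def S0_def stabilizer_def Sset_def permutes_not_in)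
    thus ?thesis by simp
  next
    case True
    have "St' \<subseteq> (\<Union>k\<in>u \<inter> I. {P \<in> St'. P l = k})"
    proof
      fix P assume P: "P \<in> St'"
      hence "P permutes (u \<inter> I)" by (auto simp: St'_def stabilizer_def Sset_def)
      hence "P l \<in> u \<inter> I" using True l by (metis IntI permutes_in_image)
      thus "P \<in> (\<Union>k\<in>u \<inter> I. {P \<in> St'. P l = k})" using P by auto
    qed
    hence "card St' \<le> card (\<Union>k\<in>u \<inter> I. {P \<in> St'. P l = k})"
      by (rule card_mono[rotated]) (rule finite_subset[OF _ finSt(2)], auto)
    also have "\<dots> \<le> (\<Sum>k\<in>u \<inter> I. card {P \<in> St'. P l = k})" by (rule card_UN_le) (use u in auto)
    also have "\<dots> \<le> (\<Sum>k\<in>u \<inter> I. card S0)"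
      by (rule sum_mono) (use card_stabilizer_fiber_le[OF u] in \<open>simp add: S0_def St'_def\<close>)
    also have "\<dots> \<le> max 1 (card I) * card S0"
    proof -
      have "card (u \<inter> I) \<le> max 1 (card I)" using finI card_mono[of I "u \<inter> I"] by auto
      thus ?thesis by (simp add: mult_right_mono)
    qed
    finally show ?thesis .
  qed
  also have "\<dots> \<le> max 1 (card I) * card (stabilizer u I h)" using cS0 by simp
  finally show ?thesis by (simp add: Mfact_eq_card_stabilizer St'_def)
qed

section \<open>Characters on the unit cube and roots of unity\<close>

lemma measurable_id_lebesgue_on[measurable]: "(\<lambda>x::real. x) \<in> borel_measurable (lebesgue_on S)"
  by (rule measurable_restrict_space1) (simp add: measurable_completion)

lemma measurable_cis[measurable]: "f \<in> borel_measurable M \<Longrightarrow> (\<lambda>x. cis (f x)) \<in> borel_measurable M"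
  by (erule measurable_compose, rule borel_measurable_continuous_onI) (intro continuous_intros)

lemma measurable_cnj[measurable]: "f \<in> borel_measurable M \<Longrightarrow> (\<lambda>x. cnj (f x)) \<in> borel_measurable M"
  by (erule measurable_compose, rule borel_measurable_continuous_onI) (intro continuous_intros)

lemma emeasure_unit_interval: "emeasure (lebesgue_on {0..1::real}) (space (lebesgue_on {0..1::real})) = 1"
  by (simp add: emeasure_restrict_space space_restrict_space)

lemma finite_measure_unit_interval: "finite_measure (lebesgue_on {0..1::real})"
  by (rule finite_measureI) (subst emeasure_unit_interval, simp)

lemma emeasure_cube_measure: "emeasure (cube_measure d) (space (cube_measure d)) = 1"
proof -
  interpret product_sigma_finite "\<lambda>_::nat. lebesgue_on {0..1::real}"
    using finite_measure_unit_interval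
    by (intro product_sigma_finite.intro) (simp add: finite_measure_def)
  have "space (cube_measure d) = PiE {1..d} (\<lambda>_. space (lebesgue_on {0..1::real}))"
    by (simp add: cube_measure_def space_PiM)
  hence "emeasure (cube_measure d) (space (cube_measure d))
      = (\<Prod>i\<in>{1..d}. emeasure (lebesgue_on {0..1::real}) (space (lebesgue_on {0..1::real})))"
    unfolding cube_measure_def by (simp add: emeasure_PiM)
  thus ?thesis using emeasure_unit_interval by simp
qed

lemma finite_measure_cube_measure: "finite_measure (cube_measure d)"
  by (rule finite_measureI) (simp add: emeasure_cube_measure)

lemma space_cube_measure: "space (cube_measure d) = cube d"
  by (simp add: cube_measure_def space_PiM cube_def space_restrict_space)

lemma integral_cis_unit_interval:
  fixes m :: int
  shows "(LINT t|lebesgue_on {0..1}. cis (2 * pi * (real_of_int m * t))) = (if m = 0 then 1 else 0)"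
proof -
  let ?f = "\<lambda>t::real. cis (2 * pi * (real_of_int m * t))"
  have int: "integrable (lebesgue_on {0..1}) ?f"
    by (rule finite_measure.integrable_const_bound[where B=1])
       (auto intro: finite_measure_unit_interval)
  have hk: "(?f has_integral (if m = 0 then 1 else 0)) {0..1}"
  proof (cases "m = 0")
    case True
    thus ?thesis using has_integral_const_real[of "1::complex" 0 1] by simp
  next
    case False
    define F where "F t = (- \<i> / (2 * pi * real_of_int m)) * cis (2 * pi * (real_of_int m * t))" for t
    have "(?f has_integral (F 1 - F 0)) {0..1}"
    proof (rule fundamental_theorem_of_calculus)
      fix x :: real assume "x \<in> {0..1}"
      have "((\<lambda>t. cis (2 * pi * (real_of_int m * t))) has_derivative
              (\<lambda>h. (2 * pi * (real_of_int m * h)) *\<^sub>R (\<i> * cis (2 * pi * (real_of_int m * x))))) (at x within {0..1})"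
        by (intro has_derivative_cis derivative_eq_intros) auto
      hence "(F has_derivative (\<lambda>h. (- \<i> / (2 * pi * real_of_int m)) *
              ((2 * pi * (real_of_int m * h)) *\<^sub>R (\<i> * cis (2 * pi * (real_of_int m * x)))))) (at x within {0..1})"
        unfolding F_def by (intro has_derivative_mult_right)
      moreover have "(\<lambda>h. (- \<i> / (2 * pi * real_of_int m)) *
              ((2 * pi * (real_of_int m * h)) *\<^sub>R (\<i> * cis (2 * pi * (real_of_int m * x)))))
            = (\<lambda>h. h *\<^sub>R cis (2 * pi * (real_of_int m * x)))"
        using False by (auto simp: fun_eq_iff scaleR_conv_of_real field_simps)
      ultimately show "(F has_vector_derivative ?f x) (at x within {0..1})"
        by (simp add: has_vector_derivative_def)
    qed simp
    moreover have "F 1 = F 0"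
      using cis_multiple_2pi[of "real_of_int m"] by (simp add: F_def)
    ultimately show ?thesis using False by simp
  qed
  have "(?f has_integral (LINT t|lebesgue_on {0..1}. ?f t)) {0..1}"
    by (rule has_integral_integral_lebesgue_on[OF int]) simp
  thus ?thesis using hk has_integral_unique by blast
qed

lemma cis_sum: "finite A \<Longrightarrow> cis (\<Sum>i\<in>A. f i) = (\<Prod>i\<in>A. cis (f i))"
  by (induction A rule: finite_induct) (auto simp: cis_mult[symmetric])

lemma integral_cis_cube:
  fixes v :: "nat \<Rightarrow> int"
  shows "(LINT x|cube_measure d. cis (2 * pi * dotp d v x)) = (if \<forall>i\<in>{1..d}. v i = 0 then 1 else 0)"
proof -
  interpret product_sigma_finite "\<lambda>_::nat. lebesgue_on {0..1::real}"
    using finite_measure_unit_interval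
    by (intro product_sigma_finite.intro) (simp add: finite_measure_def)
  have "(LINT x|cube_measure d. cis (2 * pi * dotp d v x))
      = (LINT x|cube_measure d. (\<Prod>i\<in>{1..d}. (\<lambda>i t. cis (2 * pi * (real_of_int (v i) * t))) i (x i)))"
    unfolding dotp_def by (simp add: sum_distrib_left cis_sum)
  also have "\<dots> = (\<Prod>i\<in>{1..d}. LINT t|lebesgue_on {0..1}. cis (2 * pi * (real_of_int (v i) * t)))"
    unfolding cube_measure_def
    by (rule product_integral_prod)
       (auto intro!: finite_measure.integrable_const_bound[where B=1] finite_measure_unit_interval)
  also have "\<dots> = (\<Prod>i\<in>{1..d}. if v i = 0 then 1 else 0)" by (simp add: integral_cis_unit_interval)
  also have "\<dots> = (if \<forall>i\<in>{1..d}. v i = 0 then 1 else 0)"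
    by (induction d) (auto simp: atLeastAtMostSuc_conv)
  finally show ?thesis .
qed

lemma cis_2pi_add_int: "cis (2 * pi * (x + real_of_int N)) = cis (2 * pi * x)"
proof -
  have "cis (2 * pi * (x + real_of_int N)) = cis (2 * pi * x) * cis (2 * pi * real_of_int N)"
    by (simp add: cis_mult algebra_simps)
  thus ?thesis by (simp add: cis_multiple_2pi)
qed

lemma cis_2pi_eq_1_iff: "cis (2 * pi * x) = 1 \<longleftrightarrow> x \<in> \<int>"
proof
  assume "cis (2 * pi * x) = 1"
  hence "cos (2 * pi * x) = 1" by (metis cis.sel(1) one_complex.sel(1))
  then obtain k :: int where "2 * pi * x = real_of_int k * 2 * pi" using cos_one_2pi_int by blast
  hence "x = real_of_int k" by simp
  thus "x \<in> \<int>" by simp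
qed (rule cis_multiple_2pi)

lemma sum_roots_of_unity:
  fixes m :: int and n :: nat
  assumes n: "n > 0"
  shows "(\<Sum>j<n. cis (2 * pi * (real j * real_of_int m / real n))) = (if int n dvd m then of_nat n else 0)"
proof -
  define \<omega> where "\<omega> = cis (2 * pi * (real_of_int m / real n))"
  have pw: "cis (2 * pi * (real j * real_of_int m / real n)) = \<omega> ^ j" for j
  proof -
    have "\<omega> ^ j = cis (real j * (2 * pi * (real_of_int m / real n)))" unfolding \<omega>_def by (rule Complex.DeMoivre)
    thus ?thesis by (simp add: mult_ac)
  qed
  have \<omega>n: "\<omega> ^ n = 1"
    using n pw[of n, symmetric] by (simp add: cis_multiple_2pi)
  have \<omega>1: "\<omega> = 1 \<longleftrightarrow> int n dvd m"
  proof -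
    have "\<omega> = 1 \<longleftrightarrow> real_of_int m / real n \<in> \<int>" unfolding \<omega>_def by (rule cis_2pi_eq_1_iff)
    also have "\<dots> \<longleftrightarrow> int n dvd m"
    proof
      assume "real_of_int m / real n \<in> \<int>"
      then obtain k where "real_of_int m / real n = real_of_int k" by (auto elim: Ints_cases)
      hence "m = int n * k" using n by (simp add: field_simps) (metis of_int_eq_iff of_int_mult of_int_of_nat_eq)
      thus "int n dvd m" by simp
    qed (use n in auto)
    finally show ?thesis .
  qed
  have "(\<Sum>j<n. cis (2 * pi * (real j * real_of_int m / real n))) = (\<Sum>j<n. \<omega> ^ j)"
    by (simp only: pw)
  also have "\<dots> = (if \<omega> = 1 then of_nat n else (1 - \<omega> ^ n) / (1 - \<omega>))" by (rule sum_gp_strict)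
  finally show ?thesis by (simp add: \<omega>n \<omega>1)
qed

lemma card_solutions_mod_prime_le_1:
  fixes a s :: int
  assumes p: "prime q" and a: "\<not> int q dvd a"
  shows "card {w \<in> {0..<int q}. int q dvd s + a * w} \<le> 1"
  unfolding One_nat_def
proof (subst card_le_Suc0_iff_eq)
  show "finite {w \<in> {0..<int q}. int q dvd s + a * w}" by (rule finite_subset[of _ "{0..<int q}"]) auto
  show "\<forall>w1\<in>{w \<in> {0..<int q}. int q dvd s + a * w}. \<forall>w2\<in>{w \<in> {0..<int q}. int q dvd s + a * w}. w1 = w2"
  proof (intro ballI)
    fix w1 w2 assume w1: "w1 \<in> {w \<in> {0..<int q}. int q dvd s + a * w}"
      and w2: "w2 \<in> {w \<in> {0..<int q}. int q dvd s + a * w}"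
    have "int q dvd (s + a * w1) - (s + a * w2)" using w1 w2 by (intro dvd_diff) auto
    hence "int q dvd a * (w1 - w2)" by (simp add: algebra_simps)
    moreover have "prime (int q)" using p by (simp add: prime_nat_int_transfer)
    ultimately have "int q dvd w1 - w2" using a by (simp add: prime_dvd_mult_iff)
    moreover have "\<bar>w1 - w2\<bar> < int q" using w1 w2 by auto
    ultimately show "w1 = w2" using dvd_imp_le_int[of "w1 - w2" "int q"] by fastforce
  qed
qed

lemma exists_le_nn_integral:
  fixes g :: "'a \<Rightarrow> ennreal"
  assumes M: "emeasure M (space M) = 1" and [measurable]: "g \<in> borel_measurable M"
    and le: "(\<integral>\<^sup>+x. g x \<partial>M) \<le> c" and c: "c \<noteq> \<infinity>"
  shows "\<exists>x\<in>space M. g x \<le> c"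
proof (rule ccontr)
  assume "\<not> ?thesis"
  hence gt: "\<And>x. x \<in> space M \<Longrightarrow> c < g x" by (auto simp: not_le)
  have not_AE: "\<not> (AE x in M. g x \<le> c)"
  proof
    assume "AE x in M. g x \<le> c"
    moreover have "AE x in M. x \<in> space M" by (rule AE_space)
    ultimately have "AE x in M. False" by eventually_elim (metis gt not_le)
    thus False using M by (simp add: eventually_False ae_filter_eq_bot_iff)
  qed
  have "c = (\<integral>\<^sup>+x. c \<partial>M)" using M by simp
  also have "\<dots> < (\<integral>\<^sup>+x. g x \<partial>M)"
    by (rule nn_integral_less) (use M c gt not_AE in \<open>auto intro: less_imp_le\<close>)
  finally show False using le by simp
qed

lemma wce_sq_le:
  assumes bound: "\<And>f. f \<in> H \<Longrightarrow> nrm f \<le> 1 \<Longrightarrow> cmod (Iex f - Q f) \<le> b"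
    and f0: "f0 \<in> H" "nrm f0 \<le> 1"
  shows "(wce H nrm Iex Q)\<^sup>2 \<le> ereal (b\<^sup>2)"
proof -
  define W where "W = wce H nrm Iex Q"
  have "W \<le> ereal b" unfolding W_def wce_def by (rule SUP_least) (use bound in auto)
  moreover have "ereal (cmod (Iex f0 - Q f0)) \<le> W"
    unfolding W_def wce_def by (rule SUP_upper) (use f0 in auto)
  hence "0 \<le> W" by (rule order_trans[rotated]) simp
  ultimately obtain w where "W = ereal w" "0 \<le> w" "w \<le> b" by (cases W) auto
  thus ?thesis using power_mono[of w b 2] by (simp add: W_def power2_eq_square[symmetric])
qed

section \<open>The weights\<close>

locale lattice_setting =
  fixes R :: "real \<Rightarrow> real" and cR \<alpha> \<beta>0 \<beta>1 :: real and d n :: nat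
    and I :: "nat set" and z :: "nat \<Rightarrow> int"
  assumes R_pos: "\<forall>x\<ge>1. R x > 0"
    and cR: "cR \<ge> 1"
    and R_scale: "\<forall>k m :: nat. k \<ge> 1 \<longrightarrow> m \<ge> 1 \<longrightarrow>
        R (real m) / cR \<le> R (real (k * m)) / real k \<and> R (real (k * m)) / real k \<le> R (real m)"
    and alpha: "\<alpha> \<ge> 0"
    and muR: "summable (\<lambda>m. R (real (Suc m)) powr (- 2 * \<alpha>))"
    and beta: "\<beta>0 > 0" "\<beta>1 > 0"
    and I: "I \<subseteq> {1..d}"
    and n: "prime n" "real n \<ge> cR"
begin

definition weight :: "int \<Rightarrow> real" where
  "weight k = (if k = 0 then \<beta>0 else \<beta>1 * R (real_of_int \<bar>k\<bar>) powr (- 2 * \<alpha>))"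

lemma R_abs_int_pos: "k \<noteq> 0 \<Longrightarrow> R (real_of_int \<bar>k\<bar>) > 0"
  using R_pos by simp

lemma weight_pos: "weight k > 0"
proof (cases "k = 0")
  case False
  hence "R (real_of_int \<bar>k\<bar>) powr (- 2 * \<alpha>) > 0" using R_abs_int_pos[of k] by simp
  thus ?thesis using beta False by (simp add: weight_def)
qed (use beta in \<open>simp add: weight_def\<close>)

lemma inv_rfun_eq_prod_weight: "1 / rfun R \<alpha> \<beta>0 \<beta>1 u h = (\<Prod>l\<in>u. weight (h l))"
proof -
  have "1 / rfun R \<alpha> \<beta>0 \<beta>1 u h = (\<Prod>l\<in>u. 1 / (if h l = 0 then 1 / \<beta>0 else R (real_of_int \<bar>h l\<bar>) powr (2 * \<alpha>) / \<beta>1))"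
    unfolding rfun_def by (simp add: prod_dividef)
  also have "\<dots> = (\<Prod>l\<in>u. weight (h l))"
    by (rule prod.cong) (use R_abs_int_pos in \<open>auto simp: weight_def powr_minus divide_simps\<close>)
  finally show ?thesis .
qed

lemma rfun_pos: "rfun R \<alpha> \<beta>0 \<beta>1 u h > 0"
proof -
  have "0 < 1 / rfun R \<alpha> \<beta>0 \<beta>1 u h"
    unfolding inv_rfun_eq_prod_weight by (rule prod_pos) (use weight_pos in auto)
  thus ?thesis by (simp add: zero_less_divide_1_iff)
qed

lemma R_lower_bound: "m \<ge> 1 \<Longrightarrow> real m * R 1 / cR \<le> R (real m)"
  using R_scale[rule_format, of m 1] cR by (auto simp: field_simps)

lemma summable_on_weight: "weight summable_on UNIV"
proof -
  have "(\<lambda>k::int. (\<lambda>m. \<beta>1 * R (real m) powr (- 2 * \<alpha>)) (nat \<bar>k\<bar>)) summable_on (- {0})"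
    by (rule summable_on_nonzero_int) (use beta muR in \<open>auto intro: summable_mult\<close>)
  hence "weight summable_on (- {0})"
    by (rule summable_on_cong[THEN iffD1, rotated]) (auto simp: weight_def)
  hence "weight summable_on insert 0 (- {0})" by (simp add: summable_on_insert_iff)
  moreover have "insert 0 (- {0::int}) = UNIV" by auto
  ultimately show ?thesis by simp
qed

lemma summable_on_weight_powr:
  assumes q: "q > 0" "2 * \<alpha> * q > 1"
  shows "(\<lambda>k. weight k powr q) summable_on UNIV"
proof -
  have R1: "R 1 > 0" using R_pos by simp
  define s where "s = 2 * \<alpha> * q"
  have s: "s > 1" using q by (simp add: s_def)
  txt \<open>\<open>R\<close> grows at least linearly, so \<open>weight k powr q = O(\<bar>k\<bar> powr - s)\<close>.\<close>
  have sm: "summable (\<lambda>m. \<beta>1 powr q * R (real (Suc m)) powr (- s))"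
  proof (rule summable_mult, rule summable_comparison_test)
    show "summable (\<lambda>m. (R 1 / cR) powr (- s) * real (Suc m) powr (- s))"
      using s summable_real_powr_iff[of "-s"] summable_Suc_iff[of "\<lambda>m. real m powr (-s)"]
      by (intro summable_mult) simp
    show "\<exists>N. \<forall>m\<ge>N. norm (R (real (Suc m)) powr - s) \<le> (R 1 / cR) powr - s * real (Suc m) powr - s"
    proof (intro exI allI impI)
      fix m :: nat
      have pos: "real (Suc m) * R 1 / cR > 0" using R1 cR by simp
      have "R (real (Suc m)) powr - s \<le> (real (Suc m) * R 1 / cR) powr - s"
        using R_lower_bound[of "Suc m"] pos s by (intro powr_mono2') auto
      also have "\<dots> = (R 1 / cR) powr (- s) * real (Suc m) powr (- s)"
        using R1 cR by (simp add: powr_mult[symmetric] mult_ac)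
      finally show "norm (R (real (Suc m)) powr - s) \<le> (R 1 / cR) powr - s * real (Suc m) powr - s"
        by simp
    qed
  qed
  have "(\<lambda>k::int. (\<lambda>m. \<beta>1 powr q * R (real m) powr (- s)) (nat \<bar>k\<bar>)) summable_on (- {0})"
    by (rule summable_on_nonzero_int) (use sm in auto)
  hence "(\<lambda>k. weight k powr q) summable_on (- {0})"
  proof (rule summable_on_cong[THEN iffD1, rotated])
    fix k :: int assume "k \<in> - {0}"
    hence k: "k \<noteq> 0" by simp
    have "weight k powr q = \<beta>1 powr q * (R (real_of_int \<bar>k\<bar>) powr (- 2 * \<alpha>)) powr q"
      using k beta R_abs_int_pos[OF k] by (simp add: weight_def powr_mult)
    also have "\<dots> = \<beta>1 powr q * R (real (nat \<bar>k\<bar>)) powr (- s)"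
      using R_abs_int_pos[OF k] by (simp add: powr_powr s_def)
    finally show "\<beta>1 powr q * R (real (nat \<bar>k\<bar>)) powr - s = weight k powr q" by simp
  qed
  hence "(\<lambda>k. weight k powr q) summable_on insert 0 (- {0})" by (simp add: summable_on_insert_iff)
  moreover have "insert 0 (- {0::int}) = UNIV" by auto
  ultimately show ?thesis by simp
qed

lemma summable_on_inv_rfun:
  assumes "finite u"
  shows "(\<lambda>h. 1 / rfun R \<alpha> \<beta>0 \<beta>1 u h) summable_on PiE u B"
  unfolding inv_rfun_eq_prod_weight
  by (rule summable_on_prod_PiE_nonneg)
     (use assms weight_pos summable_on_weight in \<open>auto intro: less_imp_le summable_on_subset\<close>)

lemma summable_on_inv_rfun_powr:
  assumes "finite u" "q > 0" "2 * \<alpha> * q > 1"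
  shows "(\<lambda>h. (1 / rfun R \<alpha> \<beta>0 \<beta>1 u h) powr q) summable_on PiE u B"
  unfolding inv_rfun_eq_prod_weight prod_powr_distrib
  by (rule summable_on_prod_PiE_nonneg)
     (use assms weight_pos summable_on_weight_powr in \<open>auto intro: less_imp_le summable_on_subset\<close>)

lemma n_pos: "n > 0" using n(1) prime_gt_0_nat by blast
lemma cR_div_n: "cR / real n \<le> 1" "cR / real n > 0" using n cR n_pos by auto

lemma weight_scale:
  assumes m: "m \<noteq> 0"
  shows "weight (int n * m) \<le> (cR / real n) powr (2 * \<alpha>) * weight m"
proof -
  define m' where "m' = nat \<bar>m\<bar>"
  have m'1: "m' \<ge> 1" using m by (simp add: m'_def)
  have Rm: "R (real m') > 0" using R_pos m'1 by simp
  have low: "real n * R (real m') / cR \<le> R (real (n * m'))"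
    using R_scale[rule_format, of n m'] n_pos m'1 cR by (auto simp: field_simps)
  have lowpos: "real n * R (real m') / cR > 0" using Rm n_pos cR by simp
  have "R (real (n * m')) powr (- 2 * \<alpha>) \<le> (real n * R (real m') / cR) powr (- 2 * \<alpha>)"
    using low lowpos alpha by (intro powr_mono2') auto
  also have "\<dots> = (cR / real n) powr (2 * \<alpha>) * R (real m') powr (- 2 * \<alpha>)"
  proof -
    have eq0: "real n * R (real m') / cR = (real n / cR) * R (real m')" by simp
    have "(real n * R (real m') / cR) powr (- 2 * \<alpha>) = (real n / cR) powr (- 2 * \<alpha>) * R (real m') powr (- 2 * \<alpha>)"
      unfolding eq0 by (rule powr_mult)
    also have "(real n / cR) powr (- 2 * \<alpha>) = (cR / real n) powr (2 * \<alpha>)"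
      using n_pos cR by (simp add: powr_minus_divide powr_divide)
    finally show ?thesis .
  qed
  finally have "R (real (n * m')) powr (- 2 * \<alpha>) \<le> (cR / real n) powr (2 * \<alpha>) * R (real m') powr (- 2 * \<alpha>)" .
  hence "\<beta>1 * R (real (n * m')) powr (- 2 * \<alpha>) \<le> (cR / real n) powr (2 * \<alpha>) * (\<beta>1 * R (real m') powr (- 2 * \<alpha>))"
    using beta by (simp add: mult_left_mono mult.left_commute)
  moreover have "real (n * m') = \<bar>real n * real_of_int m\<bar>" by (simp add: m'_def abs_mult)
  moreover have "real m' = \<bar>real_of_int m\<bar>" by (simp add: m'_def)
  ultimately have "\<beta>1 * R \<bar>real n * real_of_int m\<bar> powr (- 2 * \<alpha>) \<le> (cR / real n) powr (2 * \<alpha>) * (\<beta>1 * R \<bar>real_of_int m\<bar> powr (- 2 * \<alpha>))"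
    by simp
  thus ?thesis using m n_pos by (simp add: weight_def)
qed

lemma inv_rfun_scale:
  assumes u: "finite u" and l: "l \<in> u" and gl: "g l \<noteq> 0"
  shows "1 / rfun R \<alpha> \<beta>0 \<beta>1 u (g(l := int n * g l)) \<le> (cR / real n) powr (2 * \<alpha>) * (1 / rfun R \<alpha> \<beta>0 \<beta>1 u g)"
proof -
  have "1 / rfun R \<alpha> \<beta>0 \<beta>1 u (g(l := int n * g l)) = weight (int n * g l) * (\<Prod>j\<in>u - {l}. weight (g j))"
    unfolding inv_rfun_eq_prod_weight using u l by (simp add: prod.remove)
  also have "\<dots> \<le> ((cR / real n) powr (2 * \<alpha>) * weight (g l)) * (\<Prod>j\<in>u - {l}. weight (g j))"
    by (rule mult_right_mono[OF weight_scale[of "g l", OF gl]]) (auto intro: prod_nonneg less_imp_le weight_pos)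
  also have "\<dots> = (cR / real n) powr (2 * \<alpha>) * (1 / rfun R \<alpha> \<beta>0 \<beta>1 u g)"
    unfolding inv_rfun_eq_prod_weight using u l by (simp add: prod.remove)
  finally show ?thesis .
qed

section \<open>Supports and the sums \<open>B\<^sub>l\<close>\<close>

definition zero_ext :: "nat set \<Rightarrow> (nat \<Rightarrow> int) \<Rightarrow> (nat \<Rightarrow> int)" where
  "zero_ext u h = (\<lambda>j. if j \<in> u then h j else if j \<in> {1..d} then 0 else undefined)"

definition zero_vec :: "nat \<Rightarrow> int" where "zero_vec = restrict (\<lambda>_. 0) {1..d}"

definition Znz :: "(nat \<Rightarrow> int) set" where "Znz = ZZ {1..d} - {zero_vec}"

definition supports :: "nat set set" where "supports = {u. u \<subseteq> {1..d} \<and> u \<noteq> {}}"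

definition nonzero_on :: "nat set \<Rightarrow> (nat \<Rightarrow> int) set" where "nonzero_on u = PiE u (\<lambda>_. - {0})"

lemma zero_ext_ZZ: "u \<subseteq> {1..d} \<Longrightarrow> h \<in> PiE u B \<Longrightarrow> zero_ext u h \<in> ZZ {1..d}"
  by (auto simp: ZZ_def zero_ext_def PiE_def extensional_def)

lemma zero_ext_Znz:
  assumes "u \<in> supports" "h \<in> nonzero_on u" shows "zero_ext u h \<in> Znz"
proof -
  from assms obtain j where j: "j \<in> u" by (auto simp: supports_def)
  hence "zero_ext u h j \<noteq> 0" using assms by (auto simp: zero_ext_def nonzero_on_def PiE_def Pi_def)
  moreover have "zero_vec j = 0" using j assms by (auto simp: zero_vec_def supports_def)
  ultimately have "zero_ext u h \<noteq> zero_vec" by metis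
  thus ?thesis using zero_ext_ZZ[of u h] assms by (auto simp: Znz_def supports_def nonzero_on_def)
qed

lemma inj_on_zero_ext: "inj_on (zero_ext u) (PiE u B)"
proof (rule inj_onI)
  fix h h' assume h: "h \<in> PiE u B" and h': "h' \<in> PiE u B" and e: "zero_ext u h = zero_ext u h'"
  show "h = h'"
  proof (rule PiE_ext[OF h h'])
    fix j assume "j \<in> u"
    thus "h j = h' j" using fun_cong[OF e, of j] by (simp add: zero_ext_def)
  qed
qed

lemma support_zero_ext:
  assumes "u \<subseteq> {1..d}" "h \<in> nonzero_on u"
  shows "{j \<in> {1..d}. zero_ext u h j \<noteq> 0} = u"
  using assms by (auto simp: zero_ext_def nonzero_on_def PiE_def Pi_def)

lemma Znz_eq_UN_zero_ext: "Znz = (\<Union>u\<in>supports. zero_ext u ` nonzero_on u)"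
proof (intro equalityI subsetI)
  fix g assume g: "g \<in> Znz"
  hence gZ: "g \<in> PiE {1..d} (\<lambda>_. UNIV)" and g0: "g \<noteq> zero_vec" by (auto simp: Znz_def ZZ_def)
  define u where "u = {j \<in> {1..d}. g j \<noteq> 0}"
  have "u \<noteq> {}"
  proof
    assume "u = {}"
    hence "g j = zero_vec j" for j using gZ by (cases "j \<in> {1..d}") (auto simp: u_def zero_vec_def PiE_def extensional_def)
    thus False using g0 by auto
  qed
  hence uU: "u \<in> supports" by (auto simp: supports_def u_def)
  have hN: "restrict g u \<in> nonzero_on u" by (auto simp: nonzero_on_def u_def)
  have "zero_ext u (restrict g u) = g"
  proof
    fix j show "zero_ext u (restrict g u) j = g j"
      using gZ by (auto simp: zero_ext_def u_def PiE_def extensional_def)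
  qed
  thus "g \<in> (\<Union>u\<in>supports. zero_ext u ` nonzero_on u)" using uU hN by (metis UN_iff image_eqI)
next
  fix g assume "g \<in> (\<Union>u\<in>supports. zero_ext u ` nonzero_on u)"
  thus "g \<in> Znz" using zero_ext_Znz by auto
qed

lemma infsum_Znz_by_support:
  fixes \<phi> :: "(nat \<Rightarrow> int) \<Rightarrow> real"
  assumes sm: "\<phi> summable_on Znz"
  shows "infsum \<phi> Znz = (\<Sum>u\<in>supports. infsum (\<lambda>h. \<phi> (zero_ext u h)) (nonzero_on u))"
proof -
  have finU: "finite supports" by (rule finite_subset[of _ "Pow {1..d}"]) (auto simp: supports_def)
  have "(\<Sum>u\<in>supports. infsum \<phi> (zero_ext u ` nonzero_on u)) = infsum \<phi> (\<Union>u\<in>supports. zero_ext u ` nonzero_on u)"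
  proof (rule sum_infsum[OF finU])
    fix u assume "u \<in> supports"
    show "\<phi> summable_on zero_ext u ` nonzero_on u"
      by (rule summable_on_subset[OF sm]) (use zero_ext_Znz \<open>u \<in> supports\<close> in auto)
  next
    fix u u' assume u: "u \<in> supports" and u': "u' \<in> supports" and ne: "u \<noteq> u'"
    show "zero_ext u ` nonzero_on u \<inter> zero_ext u' ` nonzero_on u' = {}"
    proof (rule ccontr)
      assume "zero_ext u ` nonzero_on u \<inter> zero_ext u' ` nonzero_on u' \<noteq> {}"
      then obtain h h' where h: "h \<in> nonzero_on u" and h': "h' \<in> nonzero_on u'" and e: "zero_ext u h = zero_ext u' h'" by blast
      have "u = u'" using support_zero_ext[OF _ h] support_zero_ext[OF _ h'] u u' e by (auto simp: supports_def)
      thus False using ne by simp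
    qed
  qed
  also have "(\<Union>u\<in>supports. zero_ext u ` nonzero_on u) = Znz" by (rule Znz_eq_UN_zero_ext[symmetric])
  finally have "infsum \<phi> Znz = (\<Sum>u\<in>supports. infsum \<phi> (zero_ext u ` nonzero_on u))" by simp
  also have "\<dots> = (\<Sum>u\<in>supports. infsum (\<lambda>h. \<phi> (zero_ext u h)) (nonzero_on u))"
    by (rule sum.cong) (auto simp: infsum_reindex[OF inj_on_zero_ext] o_def nonzero_on_def)
  finally show ?thesis .
qed

definition top_supports :: "nat \<Rightarrow> nat set set" where "top_supports l = {u. u \<subseteq> {1..l} \<and> l \<in> u}"

lemma top_supports_subset: "l \<in> {1..d} \<Longrightarrow> u \<in> top_supports l \<Longrightarrow> u \<subseteq> {1..d} \<and> finite u \<and> l \<in> u"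
  by (auto simp: top_supports_def intro: finite_subset)

lemma finite_top_supports: "finite (top_supports l)"
  by (rule finite_subset[of _ "Pow {1..l}"]) (auto simp: top_supports_def)

lemma sum_supports_by_max:
  fixes F :: "nat set \<Rightarrow> real"
  shows "(\<Sum>u\<in>supports. F u) = (\<Sum>l\<in>{1..d}. \<Sum>u\<in>top_supports l. F u)"
proof -
  have supports_eq: "supports = (\<Union>l\<in>{1..d}. top_supports l)"
  proof (intro equalityI subsetI)
    fix u assume u: "u \<in> supports"
    hence fu: "finite u" "u \<noteq> {}" "u \<subseteq> {1..d}" by (auto simp: supports_def intro: finite_subset)
    have "Max u \<in> u" using fu by simp
    moreover have "u \<subseteq> {1..Max u}" using fu by auto
    moreover have "Max u \<in> {1..d}" using fu(3) \<open>Max u \<in> u\<close> by blast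
    ultimately show "u \<in> (\<Union>l\<in>{1..d}. top_supports l)" unfolding top_supports_def by blast
  qed (auto simp: top_supports_def supports_def)
  show ?thesis
    unfolding supports_eq
  proof (rule sum.UNION_disjoint)
    show "\<forall>i\<in>{1..d}. \<forall>j\<in>{1..d}. i \<noteq> j \<longrightarrow> top_supports i \<inter> top_supports j = {}"
      by (auto simp: top_supports_def) (meson atLeastAtMost_iff le_antisym subsetD)+
  qed (simp_all add: finite_top_supports)
qed

definition int_dot :: "nat set \<Rightarrow> (nat \<Rightarrow> int) \<Rightarrow> (nat \<Rightarrow> int) \<Rightarrow> int" where
  "int_dot u h w = (\<Sum>j\<in>u. h j * w j)"

definition dvd_ind :: "int \<Rightarrow> real" where "dvd_ind m = (if m mod int n = 0 then 1 else 0)"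

definition stab_ratio :: "nat set \<Rightarrow> (nat \<Rightarrow> int) \<Rightarrow> real" where
  "stab_ratio u h = real (Mfact u I h) / real (card (Sset u I))"

definition sym_weight :: "nat set \<Rightarrow> (nat \<Rightarrow> int) \<Rightarrow> real" where
  "sym_weight u h = stab_ratio u h * (1 / rfun R \<alpha> \<beta>0 \<beta>1 u h)"

lemma finite_I: "finite I" using I finite_subset by blast

lemma stab_ratio_nonneg: "0 \<le> stab_ratio u h" by (simp add: stab_ratio_def)

lemma stab_ratio_le_1: "finite u \<Longrightarrow> stab_ratio u h \<le> 1"
proof -
  assume u: "finite u"
  have a: "real (Mfact u I h) \<le> real (card (Sset u I))" using Mfact_le_card_Sset[OF u, of I h] by simp
  have b: "real (card (Sset u I)) > 0" using card_Sset[OF u] by simp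
  show ?thesis using a b by (simp add: stab_ratio_def divide_le_eq)
qed

lemma sym_weight_nonneg: "0 \<le> sym_weight u h"
  using rfun_pos[of u h] by (simp add: sym_weight_def stab_ratio_nonneg)

lemma sym_weight_le_inv_rfun: "finite u \<Longrightarrow> sym_weight u h \<le> 1 / rfun R \<alpha> \<beta>0 \<beta>1 u h"
proof -
  assume u: "finite u"
  have "stab_ratio u h * (1 / rfun R \<alpha> \<beta>0 \<beta>1 u h) \<le> 1 * (1 / rfun R \<alpha> \<beta>0 \<beta>1 u h)"
    by (rule mult_right_mono) (use stab_ratio_le_1[OF u, of h] rfun_pos[of u h] in auto)
  thus ?thesis by (simp add: sym_weight_def)
qed

lemma int_dot_zero_ext: "u \<subseteq> {1..d} \<Longrightarrow> int_dot {1..d} (zero_ext u h) w = int_dot u h w"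
proof -
  assume u: "u \<subseteq> {1..d}"
  have "int_dot {1..d} (zero_ext u h) w = (\<Sum>j\<in>{1..d} - u. zero_ext u h j * w j) + (\<Sum>j\<in>u. zero_ext u h j * w j)"
    unfolding int_dot_def by (rule sum.subset_diff[OF u]) simp
  also have "\<dots> = int_dot u h w" by (simp add: zero_ext_def int_dot_def)
  finally show ?thesis .
qed

lemma inv_rfun_zero_ext:
  assumes u: "u \<subseteq> {1..d}" and h: "h \<in> nonzero_on u"
  shows "1 / rfun R \<alpha> \<beta>0 \<beta>1 {1..d} (zero_ext u h) = \<beta>0 ^ (d - card u) * (1 / rfun R \<alpha> \<beta>0 \<beta>1 u h)"
proof -
  have "1 / rfun R \<alpha> \<beta>0 \<beta>1 {1..d} (zero_ext u h) = (\<Prod>l\<in>{1..d}. weight (zero_ext u h l))" by (rule inv_rfun_eq_prod_weight)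
  also have "\<dots> = (\<Prod>l\<in>{1..d} - u. weight (zero_ext u h l)) * (\<Prod>l\<in>u. weight (zero_ext u h l))"
    by (rule prod.subset_diff[OF u]) simp
  also have "(\<Prod>l\<in>{1..d} - u. weight (zero_ext u h l)) = \<beta>0 ^ card ({1..d} - u)"
    by (simp add: zero_ext_def weight_def)
  also have "card ({1..d} - u) = d - card u" using u by (simp add: card_Diff_subset finite_subset)
  also have "(\<Prod>l\<in>u. weight (zero_ext u h l)) = 1 / rfun R \<alpha> \<beta>0 \<beta>1 u h"
    by (simp add: inv_rfun_eq_prod_weight zero_ext_def)
  finally show ?thesis .
qed

lemma stab_ratio_zero_ext:
  assumes u: "u \<subseteq> {1..d}" and h: "h \<in> nonzero_on u"
  shows "stab_ratio {1..d} (zero_ext u h) = stab_ratio u h / real (card I choose card (I \<inter> u))"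
proof -
  define g where "g = zero_ext u h"
  have finu: "finite u" using u finite_subset by blast
  have gu: "g j \<noteq> 0" if "j \<in> u" for j using h that by (auto simp: g_def zero_ext_def nonzero_on_def PiE_def Pi_def)
  have gD: "g j = 0" if "j \<in> {1..d} - u" for j using that by (simp add: g_def zero_ext_def)
  have DI: "{1..d} \<inter> I = I" using I by auto
  have "Mfact {1..d} I g = Mfact u I g * fact (card (I - u))"
    unfolding Mfact_eq_card_stabilizer by (rule card_stabilizer_split[OF _ u I gu gD]) auto
  also have "Mfact u I g = Mfact u I h"
    unfolding Mfact_eq_card_stabilizer by (rule arg_cong[OF stabilizer_cong]) (simp add: g_def zero_ext_def)
  finally have M: "Mfact {1..d} I g = Mfact u I h * fact (card (I - u))" .
  have cI: "card (I - u) = card I - card (I \<inter> u)"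
    by (metis Diff_Int2 card_Diff_subset_Int finite_I finite_Int inf.commute inf_le2)
  have kle: "card (I \<inter> u) \<le> card I" by (rule card_mono[OF finite_I]) auto
  have "stab_ratio {1..d} g = real (Mfact u I h) * fact (card I - card (I \<inter> u)) / fact (card I)"
    using M cI card_Sset[of "{1..d}"] DI by (simp add: stab_ratio_def)
  also have "\<dots> = real (Mfact u I h) / fact (card (u \<inter> I)) / real (card I choose card (I \<inter> u))"
    using kle by (simp add: binomial_fact Int_commute field_simps)
  also have "\<dots> = stab_ratio u h / real (card I choose card (I \<inter> u))"
    using card_Sset[OF finu] by (simp add: stab_ratio_def)
  finally show ?thesis by (simp add: g_def)
qed

lemma cfac_pos: "finite u \<Longrightarrow> cfac \<beta>0 I u > 0"
proof -
  assume "finite u"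
  have "card (I \<inter> u) \<le> card I" by (rule card_mono[OF finite_I]) auto
  hence "(card I choose card (I \<inter> u)) > 0" by simp
  thus ?thesis using beta by (simp add: cfac_def)
qed

lemma sym_weight_zero_ext:
  assumes u: "u \<subseteq> {1..d}" and h: "h \<in> nonzero_on u"
  shows "sym_weight {1..d} (zero_ext u h) = \<beta>0 ^ d / cfac \<beta>0 I u * sym_weight u h"
proof -
  have cu: "card u \<le> d" using u card_mono[of "{1..d}" u] by simp
  have bp: "\<beta>0 ^ (d - card u) = \<beta>0 ^ d / \<beta>0 ^ card u"
    using cu beta by (simp add: power_diff)
  show ?thesis
    unfolding sym_weight_def stab_ratio_zero_ext[OF u h] inv_rfun_zero_ext[OF u h] cfac_def bp
    by (simp add: field_simps)
qed

lemma Bfun_eq_sym_weight: "Bfun R \<alpha> \<beta>0 \<beta>1 I n l w =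
   (\<Sum>u\<in>top_supports l. (1 / cfac \<beta>0 I u) * infsum (\<lambda>h. sym_weight u h * dvd_ind (int_dot u h w)) (nonzero_on u))"
  unfolding Bfun_def top_supports_def nonzero_on_def sym_weight_def stab_ratio_def dvd_ind_def int_dot_def by simp

lemma dvd_ind_01: "dvd_ind m = 0 \<or> dvd_ind m = 1" by (simp add: dvd_ind_def)
lemma dvd_ind_nonneg: "0 \<le> dvd_ind m" by (simp add: dvd_ind_def)
lemma dvd_ind_le_1: "dvd_ind m \<le> 1" by (simp add: dvd_ind_def)

lemma summable_on_sym_weight_mult:
  assumes u: "finite u" and X: "\<And>h. 0 \<le> X h" "\<And>h. X h \<le> 1"
  shows "(\<lambda>h. sym_weight u h * X h) summable_on PiE u B"
proof (rule summable_on_comparison_test)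
  show "(\<lambda>h. 1 / rfun R \<alpha> \<beta>0 \<beta>1 u h) summable_on PiE u B" by (rule summable_on_inv_rfun[OF u])
  fix h
  show "0 \<le> sym_weight u h * X h" using sym_weight_nonneg X by simp
  have "sym_weight u h * X h \<le> sym_weight u h * 1" by (rule mult_left_mono) (use X sym_weight_nonneg in auto)
  thus "sym_weight u h * X h \<le> 1 / rfun R \<alpha> \<beta>0 \<beta>1 u h" using sym_weight_le_inv_rfun[OF u, of h] by simp
qed

lemma summable_on_sym_weight_powr_mult:
  assumes u: "finite u" and X: "\<And>h. 0 \<le> X h" "\<And>h. X h \<le> 1"
    and q: "q > 0" "2 * \<alpha> * q > 1"
  shows "(\<lambda>h. sym_weight u h powr q * X h) summable_on PiE u B"
proof (rule summable_on_comparison_test)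
  show "(\<lambda>h. (1 / rfun R \<alpha> \<beta>0 \<beta>1 u h) powr q) summable_on PiE u B"
    by (rule summable_on_inv_rfun_powr[OF u q])
  fix h
  show "0 \<le> sym_weight u h powr q * X h" using X by simp
  have "sym_weight u h powr q * X h \<le> sym_weight u h powr q * 1" by (rule mult_left_mono) (use X in auto)
  also have "\<dots> \<le> (1 / rfun R \<alpha> \<beta>0 \<beta>1 u h) powr q"
    using sym_weight_le_inv_rfun[OF u, of h] sym_weight_nonneg[of u h] q by (simp add: powr_mono2)
  finally show "sym_weight u h powr q * X h \<le> (1 / rfun R \<alpha> \<beta>0 \<beta>1 u h) powr q" .
qed

lemma Bfun_nonneg: "0 \<le> Bfun R \<alpha> \<beta>0 \<beta>1 I n l w"
  unfolding Bfun_eq_sym_weight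
  by (intro sum_nonneg mult_nonneg_nonneg infsum_nonneg)
     (auto simp: cfac_def beta less_imp_le sym_weight_nonneg dvd_ind_nonneg)

lemma infsum_sym_weight_dvd_ind_powr_le:
  assumes u: "finite u" and p: "0 < p" "p \<le> 1" "2 * \<alpha> * p > 1"
  shows "(infsum (\<lambda>h. sym_weight u h * dvd_ind (int_dot u h w)) (nonzero_on u)) powr p
       \<le> infsum (\<lambda>h. sym_weight u h powr p * dvd_ind (int_dot u h w)) (nonzero_on u)"
proof -
  have eq: "(\<lambda>h. (sym_weight u h * dvd_ind (int_dot u h w)) powr p)
      = (\<lambda>h. sym_weight u h powr p * dvd_ind (int_dot u h w))"
  proof
    fix h show "(sym_weight u h * dvd_ind (int_dot u h w)) powr p = sym_weight u h powr p * dvd_ind (int_dot u h w)"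
      using dvd_ind_01[of "int_dot u h w"] by auto
  qed
  have "(infsum (\<lambda>h. sym_weight u h * dvd_ind (int_dot u h w)) (nonzero_on u)) powr p
      \<le> infsum (\<lambda>h. (sym_weight u h * dvd_ind (int_dot u h w)) powr p) (nonzero_on u)"
  proof (rule infsum_powr_le[OF p(1,2)])
    show "(\<lambda>h. sym_weight u h * dvd_ind (int_dot u h w)) summable_on nonzero_on u"
      unfolding nonzero_on_def
      by (rule summable_on_sym_weight_mult[OF u]) (auto simp: dvd_ind_nonneg dvd_ind_le_1)
    show "(\<lambda>h. (sym_weight u h * dvd_ind (int_dot u h w)) powr p) summable_on nonzero_on u"
      unfolding eq nonzero_on_def
      by (rule summable_on_sym_weight_powr_mult[OF u _ _ p(1,3)]) (auto simp: dvd_ind_nonneg dvd_ind_le_1)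
  qed (auto simp: sym_weight_nonneg dvd_ind_nonneg)
  thus ?thesis unfolding eq .
qed

lemma Bfun_powr_le:
  assumes l: "l \<in> {1..d}" and p: "0 < p" "p \<le> 1" "2 * \<alpha> * p > 1"
  shows "Bfun R \<alpha> \<beta>0 \<beta>1 I n l w powr p \<le>
    (\<Sum>u\<in>top_supports l. (1 / cfac \<beta>0 I u) powr p * infsum (\<lambda>h. sym_weight u h powr p * dvd_ind (int_dot u h w)) (nonzero_on u))"
proof -
  have "Bfun R \<alpha> \<beta>0 \<beta>1 I n l w powr p \<le>
      (\<Sum>u\<in>top_supports l. ((1 / cfac \<beta>0 I u) * infsum (\<lambda>h. sym_weight u h * dvd_ind (int_dot u h w)) (nonzero_on u)) powr p)"
    unfolding Bfun_eq_sym_weight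
  proof (rule sum_powr_le[OF p(1,2)])
    fix u assume u: "u \<in> top_supports l"
    have "cfac \<beta>0 I u > 0" using cfac_pos top_supports_subset[OF l u] by blast
    moreover have "0 \<le> infsum (\<lambda>h. sym_weight u h * dvd_ind (int_dot u h w)) (nonzero_on u)"
      by (rule infsum_nonneg) (simp add: sym_weight_nonneg dvd_ind_nonneg)
    ultimately show "0 \<le> 1 / cfac \<beta>0 I u * infsum (\<lambda>h. sym_weight u h * dvd_ind (int_dot u h w)) (nonzero_on u)" by simp
  qed (simp add: finite_top_supports)
  also have "\<dots> \<le> (\<Sum>u\<in>top_supports l. (1 / cfac \<beta>0 I u) powr p * infsum (\<lambda>h. sym_weight u h powr p * dvd_ind (int_dot u h w)) (nonzero_on u))"
  proof (rule sum_mono)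
    fix u assume u: "u \<in> top_supports l"
    have fu: "finite u" using top_supports_subset[OF l u] by simp
    have "((1 / cfac \<beta>0 I u) * infsum (\<lambda>h. sym_weight u h * dvd_ind (int_dot u h w)) (nonzero_on u)) powr p
        = (1 / cfac \<beta>0 I u) powr p * (infsum (\<lambda>h. sym_weight u h * dvd_ind (int_dot u h w)) (nonzero_on u)) powr p"
      by (rule powr_mult)
    also have "\<dots> \<le> (1 / cfac \<beta>0 I u) powr p * infsum (\<lambda>h. sym_weight u h powr p * dvd_ind (int_dot u h w)) (nonzero_on u)"
      by (rule mult_left_mono[OF infsum_sym_weight_dvd_ind_powr_le[OF fu p]]) simp
    finally show "((1 / cfac \<beta>0 I u) * infsum (\<lambda>h. sym_weight u h * dvd_ind (int_dot u h w)) (nonzero_on u)) powr p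
      \<le> (1 / cfac \<beta>0 I u) powr p * infsum (\<lambda>h. sym_weight u h powr p * dvd_ind (int_dot u h w)) (nonzero_on u)" .
  qed
  finally show ?thesis .
qed

definition KI :: real where "KI = real (max 1 (card I))"

lemma KI_ge_1: "KI \<ge> 1" by (simp add: KI_def)

lemma sym_weight_scale:
  assumes u: "finite u" and l: "l \<in> u" and gl: "g l \<noteq> 0"
  shows "sym_weight u (g(l := int n * g l)) \<le> KI * (cR / real n) powr (2 * \<alpha>) * sym_weight u g"
proof -
  have cpos: "real (card (Sset u I)) > 0" using card_Sset[OF u] by simp
  have "real (Mfact u I (g(l := int n * g l))) \<le> real (max 1 (card I) * Mfact u I g)"
    using Mfact_fun_upd_le[OF u finite_I l] by (simp only: of_nat_le_iff)
  hence M: "stab_ratio u (g(l := int n * g l)) \<le> KI * stab_ratio u g"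
    using cpos by (simp add: stab_ratio_def KI_def divide_right_mono del: of_nat_max)
  have "sym_weight u (g(l := int n * g l)) \<le> (KI * stab_ratio u g) * ((cR / real n) powr (2 * \<alpha>) * (1 / rfun R \<alpha> \<beta>0 \<beta>1 u g))"
    unfolding sym_weight_def
    by (rule mult_mono[OF M inv_rfun_scale[of u l g, OF u l gl]])
       (use KI_ge_1 stab_ratio_nonneg rfun_pos in \<open>auto intro: less_imp_le\<close>)
  thus ?thesis by (simp add: sym_weight_def mult_ac)
qed

lemma sym_weight_scale_powr:
  assumes u: "finite u" and l: "l \<in> u" and gl: "g l \<noteq> 0" and p: "0 < p" "2 * \<alpha> * p > 1"
  shows "sym_weight u (g(l := int n * g l)) powr p \<le> KI powr p * (cR / real n) * sym_weight u g powr p"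
proof -
  have "sym_weight u (g(l := int n * g l)) powr p \<le> (KI * (cR / real n) powr (2 * \<alpha>) * sym_weight u g) powr p"
    using sym_weight_scale[of u l g, OF u l gl] sym_weight_nonneg p by (intro powr_mono2) auto
  also have "\<dots> = KI powr p * ((cR / real n) powr (2 * \<alpha>)) powr p * sym_weight u g powr p"
    using KI_ge_1 sym_weight_nonneg by (simp add: powr_mult)
  also have "((cR / real n) powr (2 * \<alpha>)) powr p = (cR / real n) powr (2 * \<alpha> * p)"
    by (simp add: powr_powr)
  also have "\<dots> \<le> (cR / real n) powr 1"
    by (rule powr_mono') (use p cR_div_n in auto)
  finally show ?thesis
    using cR_div_n KI_ge_1 cR by (simp add: mult_left_mono mult_right_mono mult_ac fun_upd_def)
qed

lemma bij_betw_scale_entry: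
  assumes l: "l \<in> u" and n: "n > 0"
  shows "bij_betw (\<lambda>g. g(l := int n * g l)) (nonzero_on u) {h \<in> nonzero_on u. int n dvd h l}"
proof (rule bij_betw_imageI)
  show "inj_on (\<lambda>g. g(l := int n * g l)) (nonzero_on u)"
  proof (rule inj_onI)
    fix g g' assume e: "g(l := int n * g l) = g'(l := int n * g' l)"
    have "g l = g' l" using fun_cong[OF e, of l] n by simp
    hence "g j = g' j" for j using fun_cong[OF e, of j] by (cases "j = l") auto
    thus "g = g'" by auto
  qed
  show "(\<lambda>g. g(l := int n * g l)) ` nonzero_on u = {h \<in> nonzero_on u. int n dvd h l}"
  proof (intro equalityI subsetI)
    fix h assume "h \<in> (\<lambda>g. g(l := int n * g l)) ` nonzero_on u"
    then obtain g where g: "g \<in> nonzero_on u" and h: "h = g(l := int n * g l)" by blast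
    have "g l \<noteq> 0" using g l by (auto simp: nonzero_on_def PiE_def Pi_def)
    thus "h \<in> {h \<in> nonzero_on u. int n dvd h l}"
      using g l n by (auto simp: h nonzero_on_def PiE_def Pi_def extensional_def)
  next
    fix h assume "h \<in> {h \<in> nonzero_on u. int n dvd h l}"
    hence h: "h \<in> nonzero_on u" and "int n dvd h l" by auto
    then obtain m where m: "h l = int n * m" by (auto elim: dvdE)
    have "m \<noteq> 0" using h l m by (auto simp: nonzero_on_def PiE_def Pi_def)
    hence g: "h(l := m) \<in> nonzero_on u" using h l by (auto simp: nonzero_on_def PiE_def Pi_def extensional_def)
    have "h = (h(l := m))(l := int n * (h(l := m)) l)" using m by auto
    thus "h \<in> (\<lambda>g. g(l := int n * g l)) ` nonzero_on u" using g by blast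
  qed
qed

lemma infsum_multiples_le:
  assumes u: "finite u" and l: "l \<in> u" and p: "0 < p" "2 * \<alpha> * p > 1"
  shows "infsum (\<lambda>h. sym_weight u h powr p * (if int n dvd h l then 1 else 0)) (nonzero_on u)
     \<le> KI powr p * (cR / real n) * infsum (\<lambda>h. sym_weight u h powr p) (nonzero_on u)"
proof -
  define \<sigma> where "\<sigma> g = g(l := int n * g l)" for g :: "nat \<Rightarrow> int"
  define Sub where "Sub = {h \<in> nonzero_on u. int n dvd h l}"
  have bij: "bij_betw \<sigma> (nonzero_on u) Sub"
    unfolding \<sigma>_def Sub_def by (rule bij_betw_scale_entry[OF l n_pos])
  note inj = bij_betw_imp_inj_on[OF bij] and img = bij_betw_imp_surj_on[OF bij]
  have smp: "(\<lambda>h. sym_weight u h powr p) summable_on nonzero_on u"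
    using summable_on_sym_weight_powr_mult[OF u _ _ p, of "\<lambda>_. 1"] by (simp add: nonzero_on_def)
  have "infsum (\<lambda>h. sym_weight u h powr p * (if int n dvd h l then 1 else 0)) (nonzero_on u) = infsum (\<lambda>h. sym_weight u h powr p) Sub"
    by (rule infsum_cong_neutral) (auto simp: Sub_def)
  also have "\<dots> = infsum (\<lambda>g. sym_weight u (\<sigma> g) powr p) (nonzero_on u)"
    using infsum_reindex[OF inj, of "\<lambda>h. sym_weight u h powr p"] img by (simp add: o_def)
  also have "\<dots> \<le> infsum (\<lambda>g. KI powr p * (cR / real n) * sym_weight u g powr p) (nonzero_on u)"
  proof (rule infsum_mono)
    have "(\<lambda>h. sym_weight u h powr p) summable_on \<sigma> ` nonzero_on u"
      by (rule summable_on_subset[OF smp]) (auto simp: img Sub_def)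
    thus "(\<lambda>g. sym_weight u (\<sigma> g) powr p) summable_on nonzero_on u"
      using summable_on_reindex[OF inj, of "\<lambda>h. sym_weight u h powr p"] by (simp add: o_def)
    show "(\<lambda>g. KI powr p * (cR / real n) * sym_weight u g powr p) summable_on nonzero_on u"
      using smp by (rule summable_on_cmult_right)
    fix g assume g: "g \<in> nonzero_on u"
    hence "g l \<noteq> 0" using l by (auto simp: nonzero_on_def PiE_def Pi_def)
    thus "sym_weight u (\<sigma> g) powr p \<le> KI powr p * (cR / real n) * sym_weight u g powr p"
      unfolding \<sigma>_def by (rule sym_weight_scale_powr[OF u l _ p])
  qed
  also have "\<dots> = KI powr p * (cR / real n) * infsum (\<lambda>h. sym_weight u h powr p) (nonzero_on u)"
    by (rule infsum_cmult_right')
  finally show ?thesis .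
qed

lemma sum_dvd_ind_update_le:
  assumes u: "finite u" and l: "l \<in> u"
  shows "(\<Sum>w\<in>{0..<int n}. dvd_ind (int_dot u h (z(l := w)))) \<le> (if int n dvd h l then real n else 1)"
proof -
  define s where "s = int_dot (u - {l}) h z"
  have ide: "int_dot u h (z(l := w)) = s + h l * w" for w
  proof -
    have "int_dot u h (z(l := w)) = h l * (z(l := w)) l + (\<Sum>j\<in>u - {l}. h j * (z(l := w)) j)"
      unfolding int_dot_def by (rule sum.remove[OF u l])
    moreover have "(\<Sum>j\<in>u - {l}. h j * (z(l := w)) j) = s"
      unfolding s_def int_dot_def by (rule sum.cong) auto
    ultimately show ?thesis by simp
  qed
  show ?thesis
  proof (cases "int n dvd h l")
    case True
    have "(\<Sum>w\<in>{0..<int n}. dvd_ind (int_dot u h (z(l := w)))) \<le> (\<Sum>w\<in>{0..<int n}. 1)"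
      by (rule sum_mono) (simp add: dvd_ind_le_1)
    thus ?thesis using True by simp
  next
    case False
    have "(\<Sum>w\<in>{0..<int n}. dvd_ind (int_dot u h (z(l := w))))
        = (\<Sum>w\<in>{0..<int n}. if int n dvd s + h l * w then 1 else 0)"
      by (rule sum.cong) (auto simp: dvd_ind_def ide dvd_eq_mod_eq_0)
    also have "\<dots> = real (card {w \<in> {0..<int n}. int n dvd s + h l * w})"
      by (simp add: sum.inter_filter[symmetric])
    also have "card {w \<in> {0..<int n}. int n dvd s + h l * w} \<le> 1"
      by (rule card_solutions_mod_prime_le_1[OF n(1) False])
    finally show ?thesis using False by simp
  qed
qed

text \<open>\<open>S(z)\<close> of the proof sketch; \<open>shift_bound\<close> below is \<open>G(\<Delta>)\<close>.\<close>

definition lattice_sum :: real where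
  "lattice_sum = infsum (\<lambda>h. sym_weight {1..d} h * dvd_ind (int_dot {1..d} h z)) Znz"

lemma Znz_subset: "Znz \<subseteq> PiE {1..d} (\<lambda>_. UNIV)" by (auto simp: Znz_def ZZ_def)

lemma lattice_sum_eq_Bfun: "lattice_sum = \<beta>0 ^ d * (\<Sum>l\<in>{1..d}. Bfun R \<alpha> \<beta>0 \<beta>1 I n l z)"
proof -
  have sm: "(\<lambda>h. sym_weight {1..d} h * dvd_ind (int_dot {1..d} h z)) summable_on Znz"
    by (rule summable_on_subset[OF summable_on_sym_weight_mult Znz_subset]) (auto simp: dvd_ind_nonneg dvd_ind_le_1)
  have "lattice_sum = (\<Sum>u\<in>supports. infsum (\<lambda>h. sym_weight {1..d} (zero_ext u h) * dvd_ind (int_dot {1..d} (zero_ext u h) z)) (nonzero_on u))"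
    unfolding lattice_sum_def by (rule infsum_Znz_by_support[OF sm])
  also have "\<dots> = (\<Sum>u\<in>supports. \<beta>0 ^ d * ((1 / cfac \<beta>0 I u) * infsum (\<lambda>h. sym_weight u h * dvd_ind (int_dot u h z)) (nonzero_on u)))"
  proof (rule sum.cong[OF refl])
    fix u assume u: "u \<in> supports"
    hence uD: "u \<subseteq> {1..d}" by (simp add: supports_def)
    have "infsum (\<lambda>h. sym_weight {1..d} (zero_ext u h) * dvd_ind (int_dot {1..d} (zero_ext u h) z)) (nonzero_on u)
        = infsum (\<lambda>h. (\<beta>0 ^ d / cfac \<beta>0 I u) * (sym_weight u h * dvd_ind (int_dot u h z))) (nonzero_on u)"
    proof (rule infsum_cong)
      fix h assume h: "h \<in> nonzero_on u"
      show "sym_weight {1..d} (zero_ext u h) * dvd_ind (int_dot {1..d} (zero_ext u h) z) = (\<beta>0 ^ d / cfac \<beta>0 I u) * (sym_weight u h * dvd_ind (int_dot u h z))"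
        by (simp only: sym_weight_zero_ext[OF uD h] int_dot_zero_ext[OF uD])
    qed
    also have "\<dots> = (\<beta>0 ^ d / cfac \<beta>0 I u) * infsum (\<lambda>h. sym_weight u h * dvd_ind (int_dot u h z)) (nonzero_on u)"
      by (rule infsum_cmult_right')
    finally show "infsum (\<lambda>h. sym_weight {1..d} (zero_ext u h) * dvd_ind (int_dot {1..d} (zero_ext u h) z)) (nonzero_on u)
        = \<beta>0 ^ d * ((1 / cfac \<beta>0 I u) * infsum (\<lambda>h. sym_weight u h * dvd_ind (int_dot u h z)) (nonzero_on u))" by simp
  qed
  also have "\<dots> = \<beta>0 ^ d * (\<Sum>u\<in>supports. (1 / cfac \<beta>0 I u) * infsum (\<lambda>h. sym_weight u h * dvd_ind (int_dot u h z)) (nonzero_on u))"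
    by (simp add: sum_distrib_left)
  also have "(\<Sum>u\<in>supports. (1 / cfac \<beta>0 I u) * infsum (\<lambda>h. sym_weight u h * dvd_ind (int_dot u h z)) (nonzero_on u))
     = (\<Sum>l\<in>{1..d}. Bfun R \<alpha> \<beta>0 \<beta>1 I n l z)"
    unfolding sum_supports_by_max Bfun_eq_sym_weight ..
  finally show ?thesis .
qed

lemma Cdl_powr_eq:
  assumes lam: "1 \<le> lam" "lam < 2 * \<alpha>"
  shows "Cdl R \<alpha> \<beta>0 \<beta>1 d I lam powr (1 / lam) =
    (\<Sum>l\<in>{1..d}. \<Sum>u\<in>top_supports l. (\<beta>0 ^ d / cfac \<beta>0 I u) powr (1 / lam) * infsum (\<lambda>h. sym_weight u h powr (1 / lam)) (nonzero_on u))"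
proof -
  define p where "p = 1 / lam"
  have p: "0 < p" "2 * \<alpha> * p > 1" using lam by (auto simp: p_def field_simps)
  have set: "ZZ {1..d} - {restrict (\<lambda>_. 0) {1..d}} = Znz" by (simp add: Znz_def zero_vec_def)
  have fe: "(real (Mfact {1..d} I h) / real (card (Sset {1..d} I)) / rfun R \<alpha> \<beta>0 \<beta>1 {1..d} h) = sym_weight {1..d} h" for h
    by (simp add: sym_weight_def stab_ratio_def)
  define X where "X = infsum (\<lambda>h. sym_weight {1..d} h powr p) Znz"
  have X0: "0 \<le> X" unfolding X_def by (rule infsum_nonneg) simp
  have "Cdl R \<alpha> \<beta>0 \<beta>1 d I lam = X powr lam" unfolding Cdl_def set fe X_def p_def ..
  hence "Cdl R \<alpha> \<beta>0 \<beta>1 d I lam powr p = X" using X0 lam by (simp add: powr_powr p_def)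
  also have "X = (\<Sum>u\<in>supports. infsum (\<lambda>h. sym_weight {1..d} (zero_ext u h) powr p) (nonzero_on u))"
  proof -
    have "(\<lambda>h. sym_weight {1..d} h powr p * 1) summable_on Znz"
      by (rule summable_on_subset[OF summable_on_sym_weight_powr_mult[OF _ _ _ p] Znz_subset]) auto
    thus ?thesis unfolding X_def by (intro infsum_Znz_by_support) simp
  qed
  also have "\<dots> = (\<Sum>u\<in>supports. (\<beta>0 ^ d / cfac \<beta>0 I u) powr p * infsum (\<lambda>h. sym_weight u h powr p) (nonzero_on u))"
  proof (rule sum.cong[OF refl])
    fix u assume u: "u \<in> supports"
    hence uD: "u \<subseteq> {1..d}" by (simp add: supports_def)
    have "infsum (\<lambda>h. sym_weight {1..d} (zero_ext u h) powr p) (nonzero_on u)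
        = infsum (\<lambda>h. (\<beta>0 ^ d / cfac \<beta>0 I u) powr p * sym_weight u h powr p) (nonzero_on u)"
    proof (rule infsum_cong)
      fix h assume h: "h \<in> nonzero_on u"
      have "sym_weight {1..d} (zero_ext u h) powr p = (\<beta>0 ^ d / cfac \<beta>0 I u * sym_weight u h) powr p"
        by (simp only: sym_weight_zero_ext[OF uD h])
      also have "\<dots> = (\<beta>0 ^ d / cfac \<beta>0 I u) powr p * sym_weight u h powr p" by (rule powr_mult)
      finally show "sym_weight {1..d} (zero_ext u h) powr p = (\<beta>0 ^ d / cfac \<beta>0 I u) powr p * sym_weight u h powr p" .
    qed
    also have "\<dots> = (\<beta>0 ^ d / cfac \<beta>0 I u) powr p * infsum (\<lambda>h. sym_weight u h powr p) (nonzero_on u)"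
      by (rule infsum_cmult_right')
    finally show "infsum (\<lambda>h. sym_weight {1..d} (zero_ext u h) powr p) (nonzero_on u)
        = (\<beta>0 ^ d / cfac \<beta>0 I u) powr p * infsum (\<lambda>h. sym_weight u h powr p) (nonzero_on u)" .
  qed
  also have "\<dots> = (\<Sum>l\<in>{1..d}. \<Sum>u\<in>top_supports l. (\<beta>0 ^ d / cfac \<beta>0 I u) powr p * infsum (\<lambda>h. sym_weight u h powr p) (nonzero_on u))"
    unfolding sum_supports_by_max ..
  finally show ?thesis by (simp add: p_def)
qed

lemma sum_update_infsum_le:
  assumes l: "l \<in> {1..d}" and u: "u \<in> top_supports l" and p: "0 < p" "2 * \<alpha> * p > 1"
  shows "(\<Sum>w\<in>{0..<int n}. infsum (\<lambda>h. sym_weight u h powr p * dvd_ind (int_dot u h (z(l := w)))) (nonzero_on u))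
     \<le> (1 + KI powr p * cR) * infsum (\<lambda>h. sym_weight u h powr p) (nonzero_on u)"
proof -
  have fu: "finite u" and lu: "l \<in> u" using top_supports_subset[OF l u] by auto
  define T where "T = infsum (\<lambda>h. sym_weight u h powr p) (nonzero_on u)"
  define dv where "dv h = (if int n dvd h l then 1 else 0 :: real)" for h :: "nat \<Rightarrow> int"
  have smI: "(\<lambda>h. sym_weight u h powr p * X h) summable_on nonzero_on u" if "\<And>h. 0 \<le> X h" "\<And>h. X h \<le> 1" for X
    unfolding nonzero_on_def by (rule summable_on_sym_weight_powr_mult[OF fu _ _ p]) (use that in auto)
  have smT: "(\<lambda>h. sym_weight u h powr p) summable_on nonzero_on u" using smI[of "\<lambda>_. 1"] by simp
  have smD: "(\<lambda>h. sym_weight u h powr p * dv h) summable_on nonzero_on u" by (rule smI) (auto simp: dv_def)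
  have "(\<Sum>w\<in>{0..<int n}. infsum (\<lambda>h. sym_weight u h powr p * dvd_ind (int_dot u h (z(l := w)))) (nonzero_on u))
      = infsum (\<lambda>h. \<Sum>w\<in>{0..<int n}. sym_weight u h powr p * dvd_ind (int_dot u h (z(l := w)))) (nonzero_on u)"
    by (rule infsum_sum[symmetric]) (auto intro!: smI simp: dvd_ind_nonneg dvd_ind_le_1)
  also have "\<dots> \<le> infsum (\<lambda>h. sym_weight u h powr p + real n * (sym_weight u h powr p * dv h)) (nonzero_on u)"
  proof (rule infsum_mono)
    show "(\<lambda>h. \<Sum>w\<in>{0..<int n}. sym_weight u h powr p * dvd_ind (int_dot u h (z(l := w)))) summable_on nonzero_on u"
      by (rule summable_on_sum) (auto intro!: smI simp: dvd_ind_nonneg dvd_ind_le_1)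
    show "(\<lambda>h. sym_weight u h powr p + real n * (sym_weight u h powr p * dv h)) summable_on nonzero_on u"
      by (intro summable_on_add smT summable_on_cmult_right smD)
    fix h
    have "(\<Sum>w\<in>{0..<int n}. sym_weight u h powr p * dvd_ind (int_dot u h (z(l := w))))
        = sym_weight u h powr p * (\<Sum>w\<in>{0..<int n}. dvd_ind (int_dot u h (z(l := w))))"
      by (simp add: sum_distrib_left)
    also have "\<dots> \<le> sym_weight u h powr p * (1 + real n * dv h)"
      by (rule mult_left_mono) (use sum_dvd_ind_update_le[OF fu lu, of h] in \<open>auto simp: dv_def split: if_splits\<close>)
    finally show "(\<Sum>w\<in>{0..<int n}. sym_weight u h powr p * dvd_ind (int_dot u h (z(l := w))))
        \<le> sym_weight u h powr p + real n * (sym_weight u h powr p * dv h)" by (simp add: algebra_simps)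
  qed
  also have "\<dots> = T + real n * infsum (\<lambda>h. sym_weight u h powr p * dv h) (nonzero_on u)"
    unfolding T_def by (subst infsum_add) (auto intro!: smT summable_on_cmult_right smD simp: infsum_cmult_right')
  also have "\<dots> \<le> T + real n * (KI powr p * (cR / real n) * T)"
    by (intro add_left_mono mult_left_mono) (use infsum_multiples_le[OF fu lu p] in \<open>simp_all add: T_def dv_def\<close>)
  also have "\<dots> = (1 + KI powr p * cR) * T" using n_pos by (simp add: field_simps)
  finally show ?thesis by (simp add: T_def)
qed

section \<open>Averaging over the shifts\<close>

abbreviation rd :: "(nat \<Rightarrow> int) \<Rightarrow> real" where "rd k \<equiv> rfun R \<alpha> \<beta>0 \<beta>1 {1..d} k"

definition SymG :: "(nat \<Rightarrow> nat) set" where "SymG = Sset {1..d} I"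

lemma SymG_eq: "SymG = {P. P permutes I}"
  using I unfolding SymG_def Sset_def by (simp add: Int_absorb1)

lemma SymG_permutes: "P \<in> SymG \<Longrightarrow> P permutes {1..d}"
  using I by (auto simp: SymG_eq intro: permutes_subset)

lemma SymG_inv: "P \<in> SymG \<Longrightarrow> inv P \<in> SymG"
  by (simp add: SymG_eq permutes_inv)

lemma SymG_comp: "P \<in> SymG \<Longrightarrow> Q \<in> SymG \<Longrightarrow> P \<circ> Q \<in> SymG"
  by (simp add: SymG_eq permutes_compose)

lemma SymG_id: "id \<in> SymG" by (simp add: SymG_eq permutes_id)

lemma finite_SymG: "finite SymG" by (simp add: SymG_def finite_Sset)

lemma card_SymG_pos: "card SymG > 0" using finite_SymG SymG_id card_gt_0_iff by blast

lemma comp_ZZ: "k \<in> ZZ {1..d} \<Longrightarrow> P \<in> SymG \<Longrightarrow> k \<circ> P \<in> ZZ {1..d}"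
  using SymG_permutes[of P] by (auto simp: ZZ_def PiE_def extensional_def permutes_not_in)

lemma comp_eq_zero_vec: "P \<in> SymG \<Longrightarrow> k \<in> ZZ {1..d} \<Longrightarrow> k \<circ> P = zero_vec \<Longrightarrow> k = zero_vec"
proof -
  assume P: "P \<in> SymG" and k: "k \<in> ZZ {1..d}" and e: "k \<circ> P = zero_vec"
  have Pp: "P permutes {1..d}" by (rule SymG_permutes[OF P])
  show "k = zero_vec"
  proof
    fix j show "k j = zero_vec j"
    proof (cases "j \<in> {1..d}")
      case True
      have "inv P j \<in> {1..d}" using permutes_in_imageI[OF permutes_inv[OF Pp] True] .
      hence "k (P (inv P j)) = 0" using fun_cong[OF e, of "inv P j"] by (simp add: zero_vec_def)
      thus ?thesis using True by (simp add: permutes_inverses(1)[OF Pp] zero_vec_def)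
    next
      case False thus ?thesis using k by (auto simp: zero_vec_def ZZ_def PiE_def extensional_def)
    qed
  qed
qed

lemma comp_Znz: "k \<in> Znz \<Longrightarrow> P \<in> SymG \<Longrightarrow> k \<circ> P \<in> Znz"
  using comp_ZZ comp_eq_zero_vec by (auto simp: Znz_def)

lemma comp_inv_comp: "P \<in> SymG \<Longrightarrow> k \<circ> inv P \<circ> P = k"
  using permutes_inverses(2)[OF SymG_permutes] by (auto simp: fun_eq_iff)

lemma rfun_comp: "P \<in> SymG \<Longrightarrow> rfun R \<alpha> \<beta>0 \<beta>1 {1..d} (k \<circ> P) = rfun R \<alpha> \<beta>0 \<beta>1 {1..d} k"
  unfolding rfun_def o_def
  by (rule prod.reindex_bij_betw[OF permutes_imp_bij[OF SymG_permutes]])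

definition dual_perm :: "(nat \<Rightarrow> int) \<Rightarrow> (nat \<Rightarrow> nat) \<Rightarrow> bool" where
  "dual_perm k P = (int n dvd int_dot {1..d} (k \<circ> P) z)"

text \<open>\<open>avg_char k \<Delta>\<close> is the coefficient \<open>a\<^sub>k(\<Delta>)\<close> of the proof sketch at the top.\<close>

definition avg_char :: "(nat \<Rightarrow> int) \<Rightarrow> (nat \<Rightarrow> real) \<Rightarrow> complex" where
  "avg_char k \<Delta> = (\<Sum>P\<in>SymG. if dual_perm k P then cis (2 * pi * dotp d (k \<circ> P) \<Delta>) else 0) / of_nat (card SymG)"

lemma norm_avg_char_le: "cmod (avg_char k \<Delta>) \<le> 1"
proof -
  have "cmod (\<Sum>P\<in>SymG. if dual_perm k P then cis (2 * pi * dotp d (k \<circ> P) \<Delta>) else 0)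
      \<le> (\<Sum>P\<in>SymG. cmod (if dual_perm k P then cis (2 * pi * dotp d (k \<circ> P) \<Delta>) else 0))"
    by (rule norm_sum)
  also have "\<dots> \<le> (\<Sum>P\<in>SymG. 1)" by (rule sum_mono) auto
  finally show ?thesis using card_SymG_pos by (simp add: avg_char_def norm_divide divide_le_eq)
qed

lemma measurable_avg_char[measurable]: "(\<lambda>\<Delta>. avg_char k \<Delta>) \<in> borel_measurable (cube_measure d)"
  unfolding avg_char_def dotp_def cube_measure_def by measurable

definition pair_count :: "(nat \<Rightarrow> int) \<Rightarrow> real" where
  "pair_count k = (\<Sum>P\<in>SymG. \<Sum>P'\<in>SymG. if dual_perm k P \<and> (\<forall>i\<in>{1..d}. k (P i) = k (P' i)) then 1 else 0)"

lemma avg_char_mult_cnj: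
  "avg_char k \<Delta> * cnj (avg_char k \<Delta>) =
     (\<Sum>P\<in>SymG. \<Sum>P'\<in>SymG. (if dual_perm k P then 1 else 0) * (if dual_perm k P' then 1 else 0) *
        cis (2 * pi * dotp d (\<lambda>i. k (P i) - k (P' i)) \<Delta>)) / of_real ((real (card SymG))\<^sup>2)"
proof -
  define chi where "chi P = (if dual_perm k P then 1 else 0 :: complex)" for P
  define \<theta> where "\<theta> P = 2 * pi * dotp d (k \<circ> P) \<Delta>" for P
  have cchi: "cnj (chi P) = chi P" for P by (simp add: chi_def)
  have "avg_char k \<Delta> = (\<Sum>P\<in>SymG. chi P * cis (\<theta> P)) / of_real (real (card SymG))"
    unfolding avg_char_def chi_def \<theta>_def by (rule arg_cong2[where f="(/)"]) (auto intro: sum.cong)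
  hence "avg_char k \<Delta> * cnj (avg_char k \<Delta>)
      = (\<Sum>P\<in>SymG. \<Sum>P'\<in>SymG. chi P * chi P' * (cis (\<theta> P) * cnj (cis (\<theta> P'))))
        / of_real ((real (card SymG))\<^sup>2)"
    by (simp add: power2_eq_square cnj_sum sum_product mult_ac cchi)
  moreover have "cis (\<theta> P) * cnj (cis (\<theta> P')) = cis (2 * pi * dotp d (\<lambda>i. k (P i) - k (P' i)) \<Delta>)" for P P'
  proof -
    have "cis (\<theta> P) * cnj (cis (\<theta> P')) = cis (\<theta> P - \<theta> P')" by (simp add: cis_cnj cis_mult)
    also have "\<theta> P - \<theta> P' = 2 * pi * dotp d (\<lambda>i. k (P i) - k (P' i)) \<Delta>"
      by (simp add: \<theta>_def dotp_def sum_subtractf right_diff_distrib algebra_simps)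
    finally show ?thesis .
  qed
  ultimately show ?thesis by (simp add: chi_def)
qed

lemma integral_norm_avg_char_sq:
  "(LINT \<Delta>|cube_measure d. (cmod (avg_char k \<Delta>))\<^sup>2) = pair_count k / (real (card SymG))\<^sup>2"
proof -
  have integ: "integrable (cube_measure d) (\<lambda>\<Delta>. cis (2 * pi * dotp d v \<Delta>))" for v
    by (rule finite_measure.integrable_const_bound[where B=1, OF finite_measure_cube_measure])
       (auto simp: dotp_def cube_measure_def)
  have "(LINT \<Delta>|cube_measure d. (cmod (avg_char k \<Delta>))\<^sup>2)
      = (LINT \<Delta>|cube_measure d. Re (avg_char k \<Delta> * cnj (avg_char k \<Delta>)))"
    by (rule Bochner_Integration.integral_cong) (auto simp: complex_mult_cnj cmod_power2)
  also have "\<dots> = Re (LINT \<Delta>|cube_measure d. avg_char k \<Delta> * cnj (avg_char k \<Delta>))"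
  proof (rule integral_bounded_linear[OF bounded_linear_Re])
    show "integrable (cube_measure d) (\<lambda>\<Delta>. avg_char k \<Delta> * cnj (avg_char k \<Delta>))"
      by (rule finite_measure.integrable_const_bound[where B=1, OF finite_measure_cube_measure])
         (use norm_avg_char_le in \<open>auto simp: norm_mult intro!: mult_le_one\<close>)
  qed
  also have "(LINT \<Delta>|cube_measure d. avg_char k \<Delta> * cnj (avg_char k \<Delta>))
     = (\<Sum>P\<in>SymG. \<Sum>P'\<in>SymG. (if dual_perm k P then 1 else 0) * (if dual_perm k P' then 1 else 0) *
         (LINT \<Delta>|cube_measure d. cis (2 * pi * dotp d (\<lambda>i. k (P i) - k (P' i)) \<Delta>)))
       / of_real ((real (card SymG))\<^sup>2)"
    unfolding avg_char_mult_cnj by (simp add: integral_sum integ integrable_sum integrable_mult_right)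
  also have "\<dots> = (\<Sum>P\<in>SymG. \<Sum>P'\<in>SymG.
      of_real (if dual_perm k P \<and> (\<forall>i\<in>{1..d}. k (P i) = k (P' i)) then 1 else 0))
      / of_real ((real (card SymG))\<^sup>2)"
  proof -
    txt \<open>Orthogonality of the characters: only the pairs with \<open>k \<circ> P = k \<circ> P'\<close> survive.\<close>
    have "(if dual_perm k P then 1 else 0) * (if dual_perm k P' then 1 else 0) *
          (LINT \<Delta>|cube_measure d. cis (2 * pi * dotp d (\<lambda>i. k (P i) - k (P' i)) \<Delta>))
        = of_real (if dual_perm k P \<and> (\<forall>i\<in>{1..d}. k (P i) = k (P' i)) then 1 else 0)" for P P'
    proof (cases "\<forall>i\<in>{1..d}. k (P i) = k (P' i)")
      case True
      hence "dual_perm k P = dual_perm k P'" by (simp add: dual_perm_def int_dot_def)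
      thus ?thesis using True by (simp add: integral_cis_cube)
    next
      case False
      hence "\<not> (\<forall>i\<in>{1..d}. k (P i) - k (P' i) = 0)" by auto
      thus ?thesis using False by (simp only: integral_cis_cube if_False) simp
    qed
    thus ?thesis by simp
  qed
  finally show ?thesis by (simp add: pair_count_def)
qed

lemma comp_comp_inv: assumes "P \<in> SymG" shows "k \<circ> P \<circ> inv P = k"
  using permutes_inverses(1)[OF SymG_permutes[OF assms]] by (auto simp: fun_eq_iff)

lemma sum_stabilizer_indicator:
  assumes P: "P \<in> SymG"
  shows "(\<Sum>P'\<in>SymG. if A \<and> (\<forall>i\<in>{1..d}. g i = g (inv P (P' i))) then 1 else 0 :: real)
       = (if A then real (Mfact {1..d} I g) else 0)"
proof -
  have bij: "bij_betw (\<lambda>P'. inv P \<circ> P') SymG SymG"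
  proof (rule bij_betwI[where g="\<lambda>Q. P \<circ> Q"])
    show "(\<lambda>P'. inv P \<circ> P') \<in> SymG \<rightarrow> SymG" using SymG_comp SymG_inv P by auto
    show "(\<lambda>Q. P \<circ> Q) \<in> SymG \<rightarrow> SymG" using SymG_comp P by auto
    fix x assume "x \<in> SymG"
    show "P \<circ> (inv P \<circ> x) = x" using permutes_inverses(1)[OF SymG_permutes[OF P]] by (auto simp: fun_eq_iff)
    show "inv P \<circ> (P \<circ> x) = x" using permutes_inverses(2)[OF SymG_permutes[OF P]] by (auto simp: fun_eq_iff)
  qed
  have "(\<Sum>P'\<in>SymG. if A \<and> (\<forall>i\<in>{1..d}. g i = g (inv P (P' i))) then 1 else 0 :: real)
      = (\<Sum>Q\<in>SymG. if A \<and> (\<forall>i\<in>{1..d}. g i = g (Q i)) then 1 else 0 :: real)"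
    using sum.reindex_bij_betw[OF bij, of "\<lambda>Q. if A \<and> (\<forall>i\<in>{1..d}. g i = g (Q i)) then 1 else 0 :: real"]
    by simp
  also have "\<dots> = (if A then real (card {Q \<in> SymG. \<forall>i\<in>{1..d}. g i = g (Q i)}) else 0)"
    using finite_SymG by (simp add: sum.inter_filter[symmetric])
  also have "{Q \<in> SymG. \<forall>i\<in>{1..d}. g i = g (Q i)} = {Q \<in> Sset {1..d} I. \<forall>j\<in>{1..d}. g (Q j) = g j}"
    by (auto simp: SymG_def)
  finally show ?thesis by (simp add: Mfact_def)
qed

lemma sum_pair_count_reindex:
  assumes cl: "\<And>k P. k \<in> F \<Longrightarrow> P \<in> SymG \<Longrightarrow> k \<circ> P \<in> F" and P: "P \<in> SymG"
  shows "(\<Sum>k\<in>F. (\<Sum>P'\<in>SymG. if dual_perm k P \<and> (\<forall>i\<in>{1..d}. k (P i) = k (P' i)) then 1 else 0) / rd k)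
       = (\<Sum>g\<in>F. (if int n dvd int_dot {1..d} g z then real (Mfact {1..d} I g) else 0) / rd g)"
proof -
  have bij: "bij_betw (\<lambda>g. g \<circ> inv P) F F"
  proof (rule bij_betwI[where g="\<lambda>k. k \<circ> P"])
    show "(\<lambda>g. g \<circ> inv P) \<in> F \<rightarrow> F" using cl SymG_inv P by auto
    show "(\<lambda>k. k \<circ> P) \<in> F \<rightarrow> F" using cl P by auto
    fix x show "x \<circ> inv P \<circ> P = x" by (rule comp_inv_comp[OF P])
    show "x \<circ> P \<circ> inv P = x" by (rule comp_comp_inv[OF P])
  qed
  show ?thesis
  proof (subst sum.reindex_bij_betw[OF bij, symmetric], rule sum.cong[OF refl])
    fix g
    have e1: "dual_perm (g \<circ> inv P) P = (int n dvd int_dot {1..d} g z)"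
      unfolding dual_perm_def using comp_inv_comp[OF P, of g] by simp
    have e2: "(g \<circ> inv P) (P i) = g i" for i using fun_cong[OF comp_inv_comp[OF P, of g], of i] by simp
    have e3: "rd (g \<circ> inv P) = rd g" by (rule rfun_comp[OF SymG_inv[OF P]])
    show "(\<Sum>P'\<in>SymG. if dual_perm (g \<circ> inv P) P \<and> (\<forall>i\<in>{1..d}. (g \<circ> inv P) (P i) = (g \<circ> inv P) (P' i))
             then 1 else 0) / rd (g \<circ> inv P)
        = (if int n dvd int_dot {1..d} g z then real (Mfact {1..d} I g) else 0) / rd g"
    proof -
      have "(\<Sum>P'\<in>SymG. if dual_perm (g \<circ> inv P) P \<and> (\<forall>i\<in>{1..d}. (g \<circ> inv P) (P i) = (g \<circ> inv P) (P' i))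
             then 1 else 0)
          = (\<Sum>P'\<in>SymG. if int n dvd int_dot {1..d} g z \<and> (\<forall>i\<in>{1..d}. g i = g (inv P (P' i))) then 1 else 0 :: real)"
        unfolding e1 e2 by simp
      also have "\<dots> = (if int n dvd int_dot {1..d} g z then real (Mfact {1..d} I g) else 0)"
        by (rule sum_stabilizer_indicator[OF P])
      finally show ?thesis by (simp only: e3)
    qed
  qed
qed

lemma sum_pair_count:
  assumes F: "finite F" and cl: "\<And>k P. k \<in> F \<Longrightarrow> P \<in> SymG \<Longrightarrow> k \<circ> P \<in> F"
  shows "(\<Sum>k\<in>F. pair_count k / (real (card SymG))\<^sup>2 / rd k)
       = (\<Sum>g\<in>F. sym_weight {1..d} g * dvd_ind (int_dot {1..d} g z))"
proof -
  define c where "c = real (card SymG)"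
  have cpos: "c > 0" using card_SymG_pos by (simp add: c_def)
  define H where "H P k = (\<Sum>P'\<in>SymG. if dual_perm k P \<and> (\<forall>i\<in>{1..d}. k (P i) = k (P' i)) then 1 else 0) / rd k"
    for P k
  have "pair_count k / c\<^sup>2 / rd k = (\<Sum>P\<in>SymG. H P k) / c\<^sup>2" for k
    by (simp add: pair_count_def H_def sum_divide_distrib mult.commute)
  hence "(\<Sum>k\<in>F. pair_count k / c\<^sup>2 / rd k) = (\<Sum>k\<in>F. \<Sum>P\<in>SymG. H P k) / c\<^sup>2"
    by (simp add: sum_divide_distrib[symmetric])
  also have "(\<Sum>k\<in>F. \<Sum>P\<in>SymG. H P k) = (\<Sum>P\<in>SymG. \<Sum>k\<in>F. H P k)" by (rule sum.swap)
  also have "\<dots> = (\<Sum>P\<in>SymG. \<Sum>g\<in>F. (if int n dvd int_dot {1..d} g z then real (Mfact {1..d} I g) else 0) / rd g)"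
    unfolding H_def by (rule sum.cong[OF refl], rule sum_pair_count_reindex[OF cl])
  also have "\<dots> = c * (\<Sum>g\<in>F. (if int n dvd int_dot {1..d} g z then real (Mfact {1..d} I g) else 0) / rd g)"
    by (simp add: c_def)
  finally have "(\<Sum>k\<in>F. pair_count k / c\<^sup>2 / rd k)
      = (\<Sum>g\<in>F. (if int n dvd int_dot {1..d} g z then real (Mfact {1..d} I g) else 0) / rd g) / c"
    using cpos by (simp add: power2_eq_square)
  also have "\<dots> = (\<Sum>g\<in>F. sym_weight {1..d} g * dvd_ind (int_dot {1..d} g z))"
    unfolding sum_divide_distrib
    by (rule sum.cong[OF refl]) (simp add: sym_weight_def stab_ratio_def dvd_ind_def c_def SymG_def dvd_eq_mod_eq_0)
  finally show ?thesis by (simp add: c_def)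
qed

definition box_freqs :: "nat \<Rightarrow> (nat \<Rightarrow> int) set" where
  "box_freqs m = {k \<in> Znz. \<forall>i\<in>{1..d}. \<bar>k i\<bar> \<le> int m}"

definition shift_bound :: "(nat \<Rightarrow> real) \<Rightarrow> real" where
  "shift_bound \<Delta> = infsum (\<lambda>k. (cmod (avg_char k \<Delta>))\<^sup>2 / rd k) Znz"

definition shift_bound_trunc :: "nat \<Rightarrow> (nat \<Rightarrow> real) \<Rightarrow> real" where
  "shift_bound_trunc m \<Delta> = (\<Sum>k\<in>box_freqs m. (cmod (avg_char k \<Delta>))\<^sup>2 / rd k)"

lemma finite_box_freqs: "finite (box_freqs m)"
proof (rule finite_subset)
  show "box_freqs m \<subseteq> PiE {1..d} (\<lambda>_. {- int m..int m})"
  proof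
    fix k assume k: "k \<in> box_freqs m"
    hence kext: "k \<in> extensional {1..d}" and b: "\<forall>i\<in>{1..d}. \<bar>k i\<bar> \<le> int m"
      by (auto simp: box_freqs_def Znz_def ZZ_def PiE_def)
    have "k i \<in> {- int m..int m}" if i: "i \<in> {1..d}" for i
    proof -
      have "\<bar>k i\<bar> \<le> int m" using b i by blast
      thus ?thesis by auto
    qed
    thus "k \<in> PiE {1..d} (\<lambda>_. {- int m..int m})" using kext by (auto simp: PiE_def Pi_def)
  qed
  show "finite (PiE {1..d} (\<lambda>_. {- int m..int m}))" by (rule finite_PiE) auto
qed

lemma box_freqs_subset: "box_freqs m \<subseteq> Znz" by (auto simp: box_freqs_def)

lemma box_freqs_mono: "m \<le> m' \<Longrightarrow> box_freqs m \<subseteq> box_freqs m'"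
  by (auto simp: box_freqs_def)

lemma comp_box_freqs: assumes k: "k \<in> box_freqs m" and P: "P \<in> SymG" shows "k \<circ> P \<in> box_freqs m"
proof -
  have "\<bar>k (P i)\<bar> \<le> int m" if i: "i \<in> {1..d}" for i
  proof -
    have "P i \<in> {1..d}" by (rule permutes_in_imageI[OF SymG_permutes[OF P] i])
    thus ?thesis using k by (auto simp: box_freqs_def)
  qed
  thus ?thesis using comp_Znz[of k P] k P by (auto simp: box_freqs_def)
qed

lemma box_freqs_cofinal:
  assumes F: "finite F" "F \<subseteq> Znz" shows "\<exists>m. F \<subseteq> box_freqs m"
proof
  define m where "m = (\<Sum>k\<in>F. \<Sum>i\<in>{1..d}. nat \<bar>k i\<bar>)"
  show "F \<subseteq> box_freqs m"
  proof
    fix k assume k: "k \<in> F"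
    have "\<bar>k i\<bar> \<le> int m" if i: "i \<in> {1..d}" for i
    proof -
      have "nat \<bar>k i\<bar> \<le> (\<Sum>i\<in>{1..d}. nat \<bar>k i\<bar>)" by (rule member_le_sum) (use i in auto)
      also have "\<dots> \<le> m" unfolding m_def by (rule member_le_sum[where f="\<lambda>k. \<Sum>i\<in>{1..d}. nat \<bar>k i\<bar>"]) (use k F in auto)
      finally show ?thesis by linarith
    qed
    thus "k \<in> box_freqs m" using k F by (auto simp: box_freqs_def)
  qed
qed

lemma avg_char_term_nonneg: "0 \<le> (cmod (avg_char k \<Delta>))\<^sup>2 / rfun R \<alpha> \<beta>0 \<beta>1 u k"
  using rfun_pos[of u k] by simp

lemma avg_char_term_le: "(cmod (avg_char k \<Delta>))\<^sup>2 / rfun R \<alpha> \<beta>0 \<beta>1 u k \<le> 1 / rfun R \<alpha> \<beta>0 \<beta>1 u k"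
proof -
  have "(cmod (avg_char k \<Delta>))\<^sup>2 \<le> 1" using norm_avg_char_le[of k \<Delta>] by (simp add: power_le_one)
  thus ?thesis using rfun_pos[of u k] by (simp add: divide_right_mono)
qed

lemma summable_on_avg_char_term: "(\<lambda>k. (cmod (avg_char k \<Delta>))\<^sup>2 / rd k) summable_on Znz"
proof (rule summable_on_comparison_test)
  show "(\<lambda>k. 1 / rd k) summable_on Znz"
    by (rule summable_on_subset[OF summable_on_inv_rfun Znz_subset]) simp
qed (auto simp: avg_char_term_nonneg avg_char_term_le)

lemma shift_bound_eq_SUP: "ennreal (shift_bound \<Delta>) = (SUP m. ennreal (shift_bound_trunc m \<Delta>))"
proof -
  have "ennreal (shift_bound \<Delta>) = (SUP F\<in>{F. finite F \<and> F \<subseteq> Znz}. ennreal (\<Sum>k\<in>F. (cmod (avg_char k \<Delta>))\<^sup>2 / rd k))"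
    unfolding shift_bound_def by (rule infsum_nonneg_is_SUPREMUM_ennreal[OF summable_on_avg_char_term avg_char_term_nonneg])
  also have "\<dots> = (SUP m. ennreal (shift_bound_trunc m \<Delta>))"
  proof (rule SUP_eq)
    fix F assume "F \<in> {F. finite F \<and> F \<subseteq> Znz}"
    hence F: "finite F" "F \<subseteq> Znz" by auto
    obtain m where "F \<subseteq> box_freqs m" using box_freqs_cofinal[OF F] by blast
    hence "(\<Sum>k\<in>F. (cmod (avg_char k \<Delta>))\<^sup>2 / rd k) \<le> shift_bound_trunc m \<Delta>"
      unfolding shift_bound_trunc_def by (intro sum_mono2 finite_box_freqs) (auto simp: avg_char_term_nonneg)
    thus "\<exists>j\<in>UNIV. ennreal (\<Sum>k\<in>F. (cmod (avg_char k \<Delta>))\<^sup>2 / rd k) \<le> ennreal (shift_bound_trunc j \<Delta>)"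
      by (auto intro: ennreal_leI)
  next
    fix m :: nat
    show "\<exists>F\<in>{F. finite F \<and> F \<subseteq> Znz}. ennreal (shift_bound_trunc m \<Delta>) \<le> ennreal (\<Sum>k\<in>F. (cmod (avg_char k \<Delta>))\<^sup>2 / rd k)"
      using finite_box_freqs box_freqs_subset by (auto simp: shift_bound_trunc_def)
  qed
  finally show ?thesis .
qed

lemma measurable_shift_bound_trunc[measurable]: "shift_bound_trunc m \<in> borel_measurable (cube_measure d)"
  unfolding shift_bound_trunc_def by measurable

lemma integrable_shift_bound_trunc: "integrable (cube_measure d) (shift_bound_trunc m)"
  unfolding shift_bound_trunc_def
proof (rule Bochner_Integration.integrable_sum)
  fix k
  show "integrable (cube_measure d) (\<lambda>\<Delta>. (cmod (avg_char k \<Delta>))\<^sup>2 / rd k)"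
    by (rule finite_measure.integrable_const_bound[where B="1 / rd k", OF finite_measure_cube_measure])
       (auto intro!: AE_I2 simp: abs_of_pos[OF rfun_pos] avg_char_term_le)
qed

lemma integral_shift_bound_trunc_le: "(LINT \<Delta>|cube_measure d. shift_bound_trunc m \<Delta>) \<le> lattice_sum"
proof -
  have "(LINT \<Delta>|cube_measure d. shift_bound_trunc m \<Delta>) = (\<Sum>k\<in>box_freqs m. (LINT \<Delta>|cube_measure d. (cmod (avg_char k \<Delta>))\<^sup>2) / rd k)"
    unfolding shift_bound_trunc_def
  proof (subst Bochner_Integration.integral_sum)
    fix k
    show "integrable (cube_measure d) (\<lambda>\<Delta>. (cmod (avg_char k \<Delta>))\<^sup>2 / rd k)"
      by (rule finite_measure.integrable_const_bound[where B="1 / rd k", OF finite_measure_cube_measure])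
         (auto intro!: AE_I2 simp: abs_of_pos[OF rfun_pos] avg_char_term_le)
  qed simp
  also have "\<dots> = (\<Sum>k\<in>box_freqs m. pair_count k / (real (card SymG))\<^sup>2 / rd k)" by (simp add: integral_norm_avg_char_sq)
  also have "\<dots> = (\<Sum>g\<in>box_freqs m. sym_weight {1..d} g * dvd_ind (int_dot {1..d} g z))"
    by (rule sum_pair_count[OF finite_box_freqs comp_box_freqs])
  also have "\<dots> \<le> lattice_sum" unfolding lattice_sum_def
  proof (rule finite_sum_le_infsum)
    show "(\<lambda>h. sym_weight {1..d} h * dvd_ind (int_dot {1..d} h z)) summable_on Znz"
      by (rule summable_on_subset[OF summable_on_sym_weight_mult Znz_subset]) (auto simp: dvd_ind_nonneg dvd_ind_le_1)
  qed (use finite_box_freqs box_freqs_subset sym_weight_nonneg dvd_ind_nonneg in auto)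
  finally show ?thesis .
qed

lemma nn_integral_shift_bound_le:
  "(\<integral>\<^sup>+\<Delta>. ennreal (shift_bound \<Delta>) \<partial>cube_measure d) \<le> ennreal lattice_sum"
proof -
  have inc: "incseq (\<lambda>m \<Delta>. ennreal (shift_bound_trunc m \<Delta>))"
    by (auto simp: incseq_def le_fun_def shift_bound_trunc_def avg_char_term_nonneg
        intro!: ennreal_leI sum_mono2 finite_box_freqs box_freqs_mono)
  have "(\<integral>\<^sup>+\<Delta>. ennreal (shift_bound \<Delta>) \<partial>cube_measure d)
      = (SUP m. (\<integral>\<^sup>+\<Delta>. ennreal (shift_bound_trunc m \<Delta>) \<partial>cube_measure d))"
    unfolding shift_bound_eq_SUP by (rule nn_integral_monotone_convergence_SUP[OF inc]) simp
  also have "\<dots> = (SUP m. ennreal (LINT \<Delta>|cube_measure d. shift_bound_trunc m \<Delta>))"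
    by (rule SUP_cong[OF refl], rule nn_integral_eq_integral[OF integrable_shift_bound_trunc])
       (auto simp: shift_bound_trunc_def intro!: AE_I2 sum_nonneg avg_char_term_nonneg)
  also have "\<dots> \<le> ennreal lattice_sum"
    by (rule SUP_least) (use integral_shift_bound_trunc_le in \<open>auto intro: ennreal_leI\<close>)
  finally show ?thesis .
qed

lemma lattice_sum_nonneg: "0 \<le> lattice_sum"
  unfolding lattice_sum_def by (rule infsum_nonneg) (simp add: sym_weight_nonneg dvd_ind_nonneg)

lemma exists_shift_bound_le: "\<exists>\<Delta>\<in>cube d. shift_bound \<Delta> \<le> lattice_sum"
proof -
  have "(\<lambda>\<Delta>. ennreal (shift_bound \<Delta>)) \<in> borel_measurable (cube_measure d)"
    unfolding shift_bound_eq_SUP by measurable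
  from exists_le_nn_integral[OF emeasure_cube_measure this nn_integral_shift_bound_le]
  obtain \<Delta> where "\<Delta> \<in> cube d" "ennreal (shift_bound \<Delta>) \<le> ennreal lattice_sum"
    by (auto simp: space_cube_measure)
  thus ?thesis using lattice_sum_nonneg by (auto simp: ennreal_le_iff)
qed

section \<open>The lattice rule on symmetric functions\<close>

lemma Fspace_coeff_summable:
  "f \<in> Fspace R \<alpha> \<beta>0 \<beta>1 d \<Longrightarrow> (\<lambda>k. (cmod (fourier_coeff d f k))\<^sup>2 * rd k) summable_on ZZ {1..d}"
  by (simp add: Fspace_def)

lemma abs_summable_on_coeff:
  assumes f: "f \<in> Fspace R \<alpha> \<beta>0 \<beta>1 d"
  shows "(\<lambda>k. cmod (fourier_coeff d f k)) summable_on ZZ {1..d}"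
proof (rule summable_on_comparison_test)
  show "(\<lambda>k. ((cmod (fourier_coeff d f k))\<^sup>2 * rd k + 1 / rd k) / 2) summable_on ZZ {1..d}"
    by (intro summable_on_divide_const summable_on_add Fspace_coeff_summable[OF f])
       (simp add: ZZ_def summable_on_inv_rfun)
next
  fix k show "cmod (fourier_coeff d f k) \<le> ((cmod (fourier_coeff d f k))\<^sup>2 * rd k + 1 / rd k) / 2"
    by (rule le_amgm_inverse[OF rfun_pos])
qed simp

definition lattice_point :: "nat \<Rightarrow> (nat \<Rightarrow> real) \<Rightarrow> (nat \<Rightarrow> real)" where
  "lattice_point j \<Delta> = (\<lambda>i. if i \<in> {1..d} then frac (real j * real_of_int (z i) / real n + \<Delta> i) else undefined)"

lemma lattice_point_cube: "lattice_point j \<Delta> \<in> cube d"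
  by (auto simp: lattice_point_def cube_def PiE_def Pi_def extensional_def less_imp_le[OF frac_lt_1])

lemma perm_cube: "x \<in> cube d \<Longrightarrow> P \<in> SymG \<Longrightarrow> (\<lambda>i. x (inv P i)) \<in> cube d"
proof -
  assume x: "x \<in> cube d" and P: "P \<in> SymG"
  have Pi: "inv P permutes {1..d}" by (rule permutes_inv[OF SymG_permutes[OF P]])
  show ?thesis using x permutes_in_imageI[OF Pi] permutes_not_in[OF Pi]
    by (auto simp: cube_def PiE_def Pi_def extensional_def)
qed

lemma sym_eval_perm:
  assumes f: "f \<in> SymSpace R \<alpha> \<beta>0 \<beta>1 d I" and x: "x \<in> cube d" and P: "P \<in> SymG"
  shows "f x = f (\<lambda>i. x (inv P i))"
proof -
  have H: "\<forall>x\<in>cube d. \<forall>P\<in>Sset {1..d} I. f x = f (\<lambda>j. x (P j))" using f by (simp add: SymSpace_def)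
  have "inv P \<in> Sset {1..d} I" using SymG_inv[OF P] by (simp add: SymG_def)
  thus ?thesis using H x by blast
qed

lemma dotp_perm: "P \<in> SymG \<Longrightarrow> dotp d k (\<lambda>i. x (inv P i)) = dotp d (k \<circ> P) x"
proof -
  assume P: "P \<in> SymG"
  have Pp: "P permutes {1..d}" by (rule SymG_permutes[OF P])
  have "dotp d (k \<circ> P) x = (\<Sum>m\<in>{1..d}. (\<lambda>i. real_of_int (k i) * x (inv P i)) (P m))"
    unfolding dotp_def by (rule sum.cong) (auto simp: permutes_inverses(2)[OF Pp])
  also have "\<dots> = dotp d k (\<lambda>i. x (inv P i))"
    unfolding dotp_def by (rule sum.reindex_bij_betw[OF permutes_imp_bij[OF Pp]])
  finally show ?thesis by simp
qed

lemma cis_lattice_point: "cis (2 * pi * dotp d g (lattice_point j \<Delta>))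
   = cis (2 * pi * (real j * real_of_int (int_dot {1..d} g z) / real n)) * cis (2 * pi * dotp d g \<Delta>)"
proof -
  define t where "t i = real j * real_of_int (z i) / real n + \<Delta> i" for i
  define N where "N = (\<Sum>i\<in>{1..d}. - g i * \<lfloor>t i\<rfloor>)"
  have "dotp d g (lattice_point j \<Delta>) = (\<Sum>i\<in>{1..d}. real_of_int (g i) * (t i - real_of_int \<lfloor>t i\<rfloor>))"
    unfolding dotp_def lattice_point_def t_def by (rule sum.cong) (auto simp: frac_def)
  also have "\<dots> = (real j * real_of_int (int_dot {1..d} g z) / real n + dotp d g \<Delta>) + real_of_int N"
    by (simp add: t_def N_def int_dot_def dotp_def algebra_simps sum.distrib sum_distrib_left
        sum_divide_distrib sum_subtractf sum_negf)
  finally have e: "dotp d g (lattice_point j \<Delta>) = (real j * real_of_int (int_dot {1..d} g z) / real n + dotp d g \<Delta>) + real_of_int N" .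
  show ?thesis unfolding e cis_2pi_add_int by (simp add: distrib_left cis_mult[symmetric])
qed

lemma summable_on_coeff_mult:
  assumes f: "f \<in> Fspace R \<alpha> \<beta>0 \<beta>1 d" and b: "\<And>k. cmod (g k) \<le> 1"
  shows "(\<lambda>k. fourier_coeff d f k * g k) summable_on ZZ {1..d}"
proof (rule abs_summable_summable)
  show "(\<lambda>k. norm (fourier_coeff d f k * g k)) summable_on ZZ {1..d}"
  proof (rule summable_on_comparison_test[OF abs_summable_on_coeff[OF f]])
    fix k
    show "norm (fourier_coeff d f k * g k) \<le> cmod (fourier_coeff d f k)"
      using b[of k] by (simp add: norm_mult mult_left_le)
  qed simp
qed

lemma sym_eval_lattice_point:
  assumes f: "f \<in> SymSpace R \<alpha> \<beta>0 \<beta>1 d I" and P: "P \<in> SymG"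
  shows "f (lattice_point j \<Delta>) = infsum (\<lambda>k. fourier_coeff d f k *
           (cis (2 * pi * (real j * real_of_int (int_dot {1..d} (k \<circ> P) z) / real n))
            * cis (2 * pi * dotp d (k \<circ> P) \<Delta>))) (ZZ {1..d})"
proof -
  have "f (lattice_point j \<Delta>) = f (\<lambda>i. lattice_point j \<Delta> (inv P i))"
    by (rule sym_eval_perm[OF f lattice_point_cube P])
  also have "\<dots> = infsum (\<lambda>k. fourier_coeff d f k * cis (2 * pi * dotp d k (\<lambda>i. lattice_point j \<Delta> (inv P i))))
      (ZZ {1..d})"
    using f perm_cube[OF lattice_point_cube P] by (simp add: SymSpace_def Fspace_def)
  finally show ?thesis by (simp add: dotp_perm[OF P] cis_lattice_point)
qed

lemma sum_char_lattice_points: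
  "(\<Sum>j<n. \<Sum>P\<in>SymG. cis (2 * pi * (real j * real_of_int (int_dot {1..d} (k \<circ> P) z) / real n))
      * cis (2 * pi * dotp d (k \<circ> P) \<Delta>)) = of_nat n * of_nat (card SymG) * avg_char k \<Delta>"
proof -
  have "(\<Sum>j<n. \<Sum>P\<in>SymG. cis (2 * pi * (real j * real_of_int (int_dot {1..d} (k \<circ> P) z) / real n))
      * cis (2 * pi * dotp d (k \<circ> P) \<Delta>))
      = (\<Sum>P\<in>SymG. cis (2 * pi * dotp d (k \<circ> P) \<Delta>) *
         (\<Sum>j<n. cis (2 * pi * (real j * real_of_int (int_dot {1..d} (k \<circ> P) z) / real n))))"
    by (subst sum.swap) (simp add: sum_distrib_left mult_ac)
  also have "\<dots> = (\<Sum>P\<in>SymG. cis (2 * pi * dotp d (k \<circ> P) \<Delta>) *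
      (if int n dvd int_dot {1..d} (k \<circ> P) z then of_nat n else 0))"
    by (simp only: sum_roots_of_unity[OF n_pos])
  also have "\<dots> = of_nat n * (\<Sum>P\<in>SymG. if dual_perm k P then cis (2 * pi * dotp d (k \<circ> P) \<Delta>) else 0)"
    unfolding sum_distrib_left by (rule sum.cong) (auto simp: dual_perm_def)
  finally show ?thesis using card_SymG_pos by (simp add: avg_char_def)
qed

lemma lattice_rule_eq_infsum:
  assumes f: "f \<in> SymSpace R \<alpha> \<beta>0 \<beta>1 d I"
  shows "lattice_rule d n z \<Delta> f = infsum (\<lambda>k. fourier_coeff d f k * avg_char k \<Delta>) (ZZ {1..d})"
proof -
  have fF: "f \<in> Fspace R \<alpha> \<beta>0 \<beta>1 d" using f by (simp add: SymSpace_def)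
  define cc where "cc = (of_nat (card SymG) :: complex)"
  have cc0: "cc \<noteq> 0" using card_SymG_pos by (simp add: cc_def)
  define T where "T P j k = fourier_coeff d f k *
      (cis (2 * pi * (real j * real_of_int (int_dot {1..d} (k \<circ> P) z) / real n)) * cis (2 * pi * dotp d (k \<circ> P) \<Delta>))"
    for P j k
  have Tsum: "T P j summable_on ZZ {1..d}" for P j
    unfolding T_def by (rule summable_on_coeff_mult[OF fF]) (simp add: norm_mult)
  have "infsum (T P j) (ZZ {1..d}) = f (lattice_point j \<Delta>)" if "P \<in> SymG" for P j
    unfolding T_def by (rule sym_eval_lattice_point[OF f that, symmetric])
  hence "cc * f (lattice_point j \<Delta>) = (\<Sum>P\<in>SymG. infsum (T P j) (ZZ {1..d}))" for j
    by (simp add: cc_def)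
  also have "\<dots> j = infsum (\<lambda>k. \<Sum>P\<in>SymG. T P j k) (ZZ {1..d})" for j
    by (rule infsum_sum[symmetric, OF finite_SymG Tsum])
  finally have "cc * (\<Sum>j<n. f (lattice_point j \<Delta>)) = (\<Sum>j<n. infsum (\<lambda>k. \<Sum>P\<in>SymG. T P j k) (ZZ {1..d}))"
    by (simp add: sum_distrib_left)
  also have "\<dots> = infsum (\<lambda>k. \<Sum>j<n. \<Sum>P\<in>SymG. T P j k) (ZZ {1..d})"
  proof (rule infsum_sum[symmetric])
    fix j show "(\<lambda>k. \<Sum>P\<in>SymG. T P j k) summable_on ZZ {1..d}" by (rule summable_on_sum[OF finite_SymG Tsum])
  qed simp
  also have "\<dots> = infsum (\<lambda>k. (of_nat n * cc) * (fourier_coeff d f k * avg_char k \<Delta>)) (ZZ {1..d})"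
  proof (rule infsum_cong)
    fix k
    have "(\<Sum>j<n. \<Sum>P\<in>SymG. T P j k) = fourier_coeff d f k * (\<Sum>j<n. \<Sum>P\<in>SymG.
        cis (2 * pi * (real j * real_of_int (int_dot {1..d} (k \<circ> P) z) / real n)) * cis (2 * pi * dotp d (k \<circ> P) \<Delta>))"
      unfolding T_def by (simp only: sum_distrib_left)
    also have "\<dots> = fourier_coeff d f k * (of_nat n * of_nat (card SymG) * avg_char k \<Delta>)"
      by (simp only: sum_char_lattice_points)
    finally show "(\<Sum>j<n. \<Sum>P\<in>SymG. T P j k) = (of_nat n * cc) * (fourier_coeff d f k * avg_char k \<Delta>)"
      by (simp add: cc_def mult_ac)
  qed
  also have "\<dots> = (of_nat n * cc) * infsum (\<lambda>k. fourier_coeff d f k * avg_char k \<Delta>) (ZZ {1..d})"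
    by (rule infsum_cmult_right')
  finally show ?thesis using cc0 n_pos by (simp add: lattice_rule_def lattice_point_def)
qed

lemma zero_vec_ZZ: "zero_vec \<in> ZZ {1..d}" by (simp add: zero_vec_def ZZ_def)

lemma ZZ_eq_insert: "ZZ {1..d} = insert zero_vec Znz" using zero_vec_ZZ by (auto simp: Znz_def)

lemma avg_char_zero_vec: "avg_char zero_vec \<Delta> = 1"
proof -
  have "(if dual_perm zero_vec P then cis (2 * pi * dotp d (zero_vec \<circ> P) \<Delta>) else 0) = 1" if P: "P \<in> SymG" for P
  proof -
    have z: "(zero_vec \<circ> P) i = 0" if "i \<in> {1..d}" for i
      using permutes_in_imageI[OF SymG_permutes[OF P] that] by (simp add: zero_vec_def)
    have "int_dot {1..d} (zero_vec \<circ> P) z = 0" using z by (simp add: int_dot_def)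
    moreover have "dotp d (zero_vec \<circ> P) \<Delta> = 0" using z by (simp add: dotp_def)
    ultimately show ?thesis by (simp add: dual_perm_def)
  qed
  hence "(\<Sum>P\<in>SymG. if dual_perm zero_vec P then cis (2 * pi * dotp d (zero_vec \<circ> P) \<Delta>) else 0) = of_nat (card SymG)"
    by simp
  thus ?thesis using card_SymG_pos by (simp add: avg_char_def)
qed

lemma integral_eq_coeff_zero: "(LINT x|cube_measure d. f x) = fourier_coeff d f zero_vec"
proof -
  have "dotp d zero_vec x = 0" for x by (simp add: dotp_def zero_vec_def)
  thus ?thesis by (simp add: fourier_coeff_def)
qed

lemma zero_in_SymSpace: "(\<lambda>_. 0) \<in> SymSpace R \<alpha> \<beta>0 \<beta>1 d I" "Fnorm R \<alpha> \<beta>0 \<beta>1 d (\<lambda>_. 0) = 0"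
proof -
  have fc: "fourier_coeff d (\<lambda>_. 0) k = 0" for k by (simp add: fourier_coeff_def)
  show "(\<lambda>_. 0) \<in> SymSpace R \<alpha> \<beta>0 \<beta>1 d I" by (simp add: SymSpace_def Fspace_def fc)
  show "Fnorm R \<alpha> \<beta>0 \<beta>1 d (\<lambda>_. 0) = 0" by (simp add: Fnorm_def Fnorm2_def fc)
qed

lemma lattice_rule_error_eq:
  assumes f: "f \<in> SymSpace R \<alpha> \<beta>0 \<beta>1 d I"
  shows "(LINT x|cube_measure d. f x) - lattice_rule d n z \<Delta> f
       = - infsum (\<lambda>k. fourier_coeff d f k * avg_char k \<Delta>) Znz"
proof -
  have "(\<lambda>k. fourier_coeff d f k * avg_char k \<Delta>) summable_on ZZ {1..d}"
    using f by (intro summable_on_coeff_mult norm_avg_char_le) (simp add: SymSpace_def)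
  hence sm: "(\<lambda>k. fourier_coeff d f k * avg_char k \<Delta>) summable_on Znz"
    by (rule summable_on_subset) (auto simp: Znz_def)
  have "lattice_rule d n z \<Delta> f = infsum (\<lambda>k. fourier_coeff d f k * avg_char k \<Delta>) (insert zero_vec Znz)"
    unfolding lattice_rule_eq_infsum[OF f] ZZ_eq_insert ..
  also have "\<dots> = fourier_coeff d f zero_vec + infsum (\<lambda>k. fourier_coeff d f k * avg_char k \<Delta>) Znz"
    by (subst infsum_insert[OF sm]) (simp_all add: avg_char_zero_vec Znz_def)
  finally show ?thesis by (simp add: integral_eq_coeff_zero)
qed

lemma infsum_coeff_sq_le_1:
  assumes f: "f \<in> Fspace R \<alpha> \<beta>0 \<beta>1 d" and nf: "Fnorm R \<alpha> \<beta>0 \<beta>1 d f \<le> 1"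
  shows "infsum (\<lambda>k. (cmod (fourier_coeff d f k))\<^sup>2 * rd k) Znz \<le> 1"
proof -
  have "infsum (\<lambda>k. (cmod (fourier_coeff d f k))\<^sup>2 * rd k) Znz
      \<le> infsum (\<lambda>k. (cmod (fourier_coeff d f k))\<^sup>2 * rd k) (ZZ {1..d})"
    by (rule infsum_mono_neutral)
       (use Fspace_coeff_summable[OF f] rfun_pos in \<open>auto simp: Znz_def less_imp_le intro: summable_on_subset\<close>)
  also have "\<dots> = Fnorm2 R \<alpha> \<beta>0 \<beta>1 d f" by (simp add: Fnorm2_def)
  also have "\<dots> \<le> 1"
  proof -
    have "0 \<le> Fnorm2 R \<alpha> \<beta>0 \<beta>1 d f"
      unfolding Fnorm2_def by (rule infsum_nonneg) (use rfun_pos in \<open>auto simp: less_imp_le\<close>)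
    thus ?thesis using nf by (simp add: Fnorm_def)
  qed
  finally show ?thesis .
qed

lemma error_le_sqrt_shift_bound:
  assumes f: "f \<in> SymSpace R \<alpha> \<beta>0 \<beta>1 d I" and nf: "Fnorm R \<alpha> \<beta>0 \<beta>1 d f \<le> 1"
  shows "cmod ((LINT x|cube_measure d. f x) - lattice_rule d n z \<Delta> f) \<le> sqrt (shift_bound \<Delta>)"
proof -
  have fF: "f \<in> Fspace R \<alpha> \<beta>0 \<beta>1 d" using f by (simp add: SymSpace_def)
  define fh where "fh = fourier_coeff d f"
  txt \<open>Cauchy--Schwarz with the weights \<open>r(k)\<close> and \<open>1/r(k)\<close>.\<close>
  define x where "x k = cmod (fh k) * sqrt (rd k)" for k
  define y where "y k = cmod (avg_char k \<Delta>) / sqrt (rd k)" for k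
  have rp: "rd k > 0" for k by (rule rfun_pos)
  have x2: "(x k)\<^sup>2 = (cmod (fh k))\<^sup>2 * rd k" for k using rp[of k] by (simp add: x_def power_mult_distrib)
  have y2: "(y k)\<^sup>2 = (cmod (avg_char k \<Delta>))\<^sup>2 / rd k" for k using rp[of k] by (simp add: y_def power_divide)
  have nx: "\<And>k. 0 \<le> x k" and ny: "\<And>k. 0 \<le> y k" using rp by (auto simp: x_def y_def less_imp_le)
  have sx: "(\<lambda>k. (x k)\<^sup>2) summable_on Znz"
    unfolding x2 fh_def by (rule summable_on_subset[OF Fspace_coeff_summable[OF fF]]) (auto simp: Znz_def)
  have sy: "(\<lambda>k. (y k)\<^sup>2) summable_on Znz" unfolding y2 by (rule summable_on_avg_char_term)
  have "cmod (infsum (\<lambda>k. fh k * avg_char k \<Delta>) Znz) \<le> infsum (\<lambda>k. x k * y k) Znz"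
  proof (rule norm_infsum_le)
    show "((\<lambda>k. fh k * avg_char k \<Delta>) has_sum infsum (\<lambda>k. fh k * avg_char k \<Delta>) Znz) Znz"
      using fF unfolding fh_def
      by (intro has_sum_infsum summable_on_subset[OF summable_on_coeff_mult[OF _ norm_avg_char_le]])
         (auto simp: Znz_def)
    show "((\<lambda>k. x k * y k) has_sum infsum (\<lambda>k. x k * y k) Znz) Znz"
      using summable_on_mult_of_squares[OF nx ny sx sy] by simp
  qed (use rp in \<open>simp add: x_def y_def norm_mult less_imp_neq[symmetric]\<close>)
  also have "\<dots> \<le> sqrt (infsum (\<lambda>k. (x k)\<^sup>2) Znz) * sqrt (infsum (\<lambda>k. (y k)\<^sup>2) Znz)"
    by (rule infsum_mult_le_sqrt[OF nx ny sx sy])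
  also have "\<dots> \<le> 1 * sqrt (shift_bound \<Delta>)"
  proof (rule mult_mono)
    show "sqrt (infsum (\<lambda>k. (x k)\<^sup>2) Znz) \<le> 1"
      using infsum_coeff_sq_le_1[OF fF nf] by (simp add: x2 fh_def)
    show "sqrt (infsum (\<lambda>k. (y k)\<^sup>2) Znz) \<le> sqrt (shift_bound \<Delta>)" by (simp add: y2 shift_bound_def)
  qed (auto intro: infsum_nonneg)
  finally show ?thesis by (simp add: lattice_rule_error_eq[OF f] fh_def)
qed

end

section \<open>The component-by-component bound\<close>

locale cbc_setting = lattice_setting +
  assumes z1: "z 1 \<in> {1..int n - 1}"
    and zCBC: "\<And>l w. l \<in> {2..d} \<Longrightarrow> w \<in> {0..<int n} \<Longrightarrow>
        Bfun R \<alpha> \<beta>0 \<beta>1 I n l z \<le> Bfun R \<alpha> \<beta>0 \<beta>1 I n l (z(l := w))"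
begin

lemma dvd_ind_first_le: "dvd_ind (int_dot {1} h z) \<le> (if int n dvd h 1 then 1 else 0)"
proof (cases "int n dvd h 1 * z 1")
  case True
  have "\<not> int n dvd z 1"
  proof
    assume "int n dvd z 1"
    hence "int n \<le> z 1" using z1 zdvd_imp_le[of "int n" "z 1"] by auto
    thus False using z1 by auto
  qed
  moreover have "prime (int n)" using n(1) by (simp add: prime_nat_int_transfer)
  ultimately have "int n dvd h 1" using True by (simp add: prime_dvd_mult_iff)
  thus ?thesis by (simp add: dvd_ind_le_1)
qed (simp add: dvd_ind_def int_dot_def dvd_eq_mod_eq_0)

lemma Bfun_first_powr_le:
  assumes d: "1 \<le> d" and p: "0 < p" "p \<le> 1" "2 * \<alpha> * p > 1"
  shows "Bfun R \<alpha> \<beta>0 \<beta>1 I n 1 z powr p \<le> KI powr p * cR / real n *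
     (\<Sum>u\<in>top_supports 1. (1 / cfac \<beta>0 I u) powr p * infsum (\<lambda>h. sym_weight u h powr p) (nonzero_on u))"
proof -
  have "Bfun R \<alpha> \<beta>0 \<beta>1 I n 1 z powr p \<le> (\<Sum>u\<in>top_supports 1.
      (1 / cfac \<beta>0 I u) powr p * infsum (\<lambda>h. sym_weight u h powr p * dvd_ind (int_dot u h z)) (nonzero_on u))"
    by (rule Bfun_powr_le) (use d p in auto)
  also have "\<dots> \<le> (\<Sum>u\<in>top_supports 1.
      (1 / cfac \<beta>0 I u) powr p * (KI powr p * (cR / real n) * infsum (\<lambda>h. sym_weight u h powr p) (nonzero_on u)))"
  proof (rule sum_mono, rule mult_left_mono)
    fix u assume "u \<in> top_supports 1"
    hence u1: "u = {1}" by (auto simp: top_supports_def)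
    have "infsum (\<lambda>h. sym_weight u h powr p * dvd_ind (int_dot u h z)) (nonzero_on u)
        \<le> infsum (\<lambda>h. sym_weight u h powr p * (if int n dvd h 1 then 1 else 0)) (nonzero_on u)"
    proof (rule infsum_mono)
      show "(\<lambda>h. sym_weight u h powr p * dvd_ind (int_dot u h z)) summable_on nonzero_on u"
        unfolding nonzero_on_def
        by (rule summable_on_sym_weight_powr_mult) (use u1 p in \<open>auto simp: dvd_ind_nonneg dvd_ind_le_1\<close>)
      show "(\<lambda>h. sym_weight u h powr p * (if int n dvd h 1 then 1 else 0)) summable_on nonzero_on u"
        unfolding nonzero_on_def by (rule summable_on_sym_weight_powr_mult) (use u1 p in auto)
      show "sym_weight u h powr p * dvd_ind (int_dot u h z)
          \<le> sym_weight u h powr p * (if int n dvd h 1 then 1 else 0)" for h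
        unfolding u1 by (rule mult_left_mono[OF dvd_ind_first_le]) simp
    qed
    also have "\<dots> \<le> KI powr p * (cR / real n) * infsum (\<lambda>h. sym_weight u h powr p) (nonzero_on u)"
      by (rule infsum_multiples_le) (use u1 p in auto)
    finally show "infsum (\<lambda>h. sym_weight u h powr p * dvd_ind (int_dot u h z)) (nonzero_on u)
      \<le> KI powr p * (cR / real n) * infsum (\<lambda>h. sym_weight u h powr p) (nonzero_on u)" .
  qed simp
  finally show ?thesis by (simp add: sum_distrib_left mult_ac)
qed

text \<open>By the minimality of \<open>z\<^sub>l\<close>, \<open>B\<^sub>l(z)\<^sup>p\<close> is at most its mean over all \<open>n\<close> values of \<open>z\<^sub>l\<close>.\<close>

lemma Bfun_CBC_powr_le:
  assumes l: "l \<in> {2..d}" and p: "0 < p" "p \<le> 1" "2 * \<alpha> * p > 1"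
  shows "Bfun R \<alpha> \<beta>0 \<beta>1 I n l z powr p \<le> (1 + KI powr p * cR) / real n *
     (\<Sum>u\<in>top_supports l. (1 / cfac \<beta>0 I u) powr p * infsum (\<lambda>h. sym_weight u h powr p) (nonzero_on u))"
proof -
  have l': "l \<in> {1..d}" using l by simp
  have zl: "\<forall>w\<in>{0..<int n}. Bfun R \<alpha> \<beta>0 \<beta>1 I n l z \<le> Bfun R \<alpha> \<beta>0 \<beta>1 I n l (z(l := w))"
    using zCBC l by blast
  define c where "c u = (1 / cfac \<beta>0 I u) powr p" for u
  define T where "T u = infsum (\<lambda>h. sym_weight u h powr p) (nonzero_on u)" for u
  have c0: "0 \<le> c u" for u by (simp add: c_def)
  have "real n * Bfun R \<alpha> \<beta>0 \<beta>1 I n l z powr p = (\<Sum>w\<in>{0..<int n}. Bfun R \<alpha> \<beta>0 \<beta>1 I n l z powr p)"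
    by simp
  also have "\<dots> \<le> (\<Sum>w\<in>{0..<int n}. Bfun R \<alpha> \<beta>0 \<beta>1 I n l (z(l := w)) powr p)"
    by (rule sum_mono) (use zl Bfun_nonneg p in \<open>auto intro!: powr_mono2\<close>)
  also have "\<dots> \<le> (\<Sum>w\<in>{0..<int n}. \<Sum>u\<in>top_supports l. c u * infsum (\<lambda>h. sym_weight u h powr p * dvd_ind (int_dot u h (z(l := w)))) (nonzero_on u))"
    unfolding c_def by (rule sum_mono) (rule Bfun_powr_le[OF l' p])
  also have "\<dots> = (\<Sum>u\<in>top_supports l. c u * (\<Sum>w\<in>{0..<int n}. infsum (\<lambda>h. sym_weight u h powr p * dvd_ind (int_dot u h (z(l := w)))) (nonzero_on u)))"
    by (subst sum.swap) (simp add: sum_distrib_left)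
  also have "\<dots> \<le> (\<Sum>u\<in>top_supports l. c u * ((1 + KI powr p * cR) * T u))"
    by (rule sum_mono, rule mult_left_mono) (use sum_update_infsum_le[OF l' _ p(1,3)] c0 in \<open>auto simp: T_def\<close>)
  finally have "real n * Bfun R \<alpha> \<beta>0 \<beta>1 I n l z powr p \<le> (1 + KI powr p * cR) * (\<Sum>u\<in>top_supports l. c u * T u)"
    by (simp add: sum_distrib_left mult_ac)
  thus ?thesis using n_pos by (simp add: c_def T_def field_simps)
qed

lemma Bfun_powr_le_avg:
  assumes l: "l \<in> {1..d}" and p: "0 < p" "p \<le> 1" "2 * \<alpha> * p > 1"
  shows "Bfun R \<alpha> \<beta>0 \<beta>1 I n l z powr p \<le> (1 + KI powr p * cR) / real n *
     (\<Sum>u\<in>top_supports l. (1 / cfac \<beta>0 I u) powr p * infsum (\<lambda>h. sym_weight u h powr p) (nonzero_on u))"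
proof (cases "l = 1")
  case True
  have "KI powr p * cR / real n \<le> (1 + KI powr p * cR) / real n"
    using n_pos by (simp add: divide_right_mono)
  moreover have "0 \<le> (\<Sum>u\<in>top_supports 1. (1 / cfac \<beta>0 I u) powr p * infsum (\<lambda>h. sym_weight u h powr p) (nonzero_on u))"
    by (intro sum_nonneg mult_nonneg_nonneg infsum_nonneg) auto
  ultimately show ?thesis
    using Bfun_first_powr_le[OF _ p] l True by (meson atLeastAtMost_iff mult_right_mono order.trans)
qed (use Bfun_CBC_powr_le l p in auto)

lemma lattice_sum_powr_le:
  assumes lam: "1 \<le> lam" "lam < 2 * \<alpha>"
  shows "lattice_sum powr (1 / lam)
    \<le> (1 + KI powr (1 / lam) * cR) / real n * Cdl R \<alpha> \<beta>0 \<beta>1 d I lam powr (1 / lam)"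
proof -
  define p where "p = 1 / lam"
  have p: "0 < p" "p \<le> 1" "2 * \<alpha> * p > 1" using lam by (auto simp: p_def field_simps)
  define A where "A = (1 + KI powr p * cR) / real n"
  have B0: "\<And>l. 0 \<le> Bfun R \<alpha> \<beta>0 \<beta>1 I n l z" by (rule Bfun_nonneg)
  have "lattice_sum powr p \<le> (\<Sum>l\<in>{1..d}. (\<beta>0 ^ d * Bfun R \<alpha> \<beta>0 \<beta>1 I n l z) powr p)"
    unfolding lattice_sum_eq_Bfun sum_distrib_left by (rule sum_powr_le[OF p(1,2)]) (use B0 beta in auto)
  also have "\<dots> \<le> (\<Sum>l\<in>{1..d}. (\<beta>0 ^ d) powr p * (A *
     (\<Sum>u\<in>top_supports l. (1 / cfac \<beta>0 I u) powr p * infsum (\<lambda>h. sym_weight u h powr p) (nonzero_on u))))"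
  proof (rule sum_mono)
    fix l assume l: "l \<in> {1..d}"
    have "(\<beta>0 ^ d * Bfun R \<alpha> \<beta>0 \<beta>1 I n l z) powr p = (\<beta>0 ^ d) powr p * Bfun R \<alpha> \<beta>0 \<beta>1 I n l z powr p"
      by (rule powr_mult)
    also have "\<dots> \<le> (\<beta>0 ^ d) powr p * (A *
     (\<Sum>u\<in>top_supports l. (1 / cfac \<beta>0 I u) powr p * infsum (\<lambda>h. sym_weight u h powr p) (nonzero_on u)))"
      unfolding A_def by (rule mult_left_mono[OF Bfun_powr_le_avg[OF l p]]) simp
    finally show "(\<beta>0 ^ d * Bfun R \<alpha> \<beta>0 \<beta>1 I n l z) powr p \<le> (\<beta>0 ^ d) powr p * (A *
     (\<Sum>u\<in>top_supports l. (1 / cfac \<beta>0 I u) powr p * infsum (\<lambda>h. sym_weight u h powr p) (nonzero_on u)))" .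
  qed
  also have "\<dots> = A * (\<Sum>l\<in>{1..d}. \<Sum>u\<in>top_supports l. (\<beta>0 ^ d / cfac \<beta>0 I u) powr p * infsum (\<lambda>h. sym_weight u h powr p) (nonzero_on u))"
  proof -
    have "(\<beta>0 ^ d / cfac \<beta>0 I u) powr p = (\<beta>0 ^ d) powr p * (1 / cfac \<beta>0 I u) powr p" for u
      by (simp add: powr_mult[symmetric])
    thus ?thesis by (simp add: sum_distrib_left mult_ac)
  qed
  also have "\<dots> = A * Cdl R \<alpha> \<beta>0 \<beta>1 d I lam powr p"
    using Cdl_powr_eq[OF lam] by (simp add: p_def)
  finally show ?thesis by (simp add: A_def p_def)
qed

lemma lattice_sum_le:
  assumes lam: "1 \<le> lam" "lam < 2 * \<alpha>"
  shows "lattice_sum \<le> (1 + cR) powr lam * Cdl R \<alpha> \<beta>0 \<beta>1 d I lam * KI / real n powr lam"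
proof -
  define p where "p = 1 / lam"
  have p: "0 < p" using lam by (simp add: p_def)
  define A where "A = (1 + KI powr p * cR) / real n"
  have A0: "0 \<le> A" using n_pos cR by (simp add: A_def)
  have S0: "0 \<le> lattice_sum" unfolding lattice_sum_eq_Bfun using Bfun_nonneg beta by (simp add: sum_nonneg)
  have Sp: "lattice_sum powr p \<le> A * Cdl R \<alpha> \<beta>0 \<beta>1 d I lam powr p"
    using lattice_sum_powr_le[OF lam] by (simp add: A_def p_def)
  have C0: "0 \<le> Cdl R \<alpha> \<beta>0 \<beta>1 d I lam" by (simp add: Cdl_def)
  have "lattice_sum = (lattice_sum powr p) powr lam" using S0 lam by (simp add: powr_powr p_def)
  also have "\<dots> \<le> (A * Cdl R \<alpha> \<beta>0 \<beta>1 d I lam powr p) powr lam"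
    by (rule powr_mono2) (use Sp lam in auto)
  also have "\<dots> = A powr lam * Cdl R \<alpha> \<beta>0 \<beta>1 d I lam"
    using A0 C0 lam by (simp add: powr_mult powr_powr p_def)
  also have "A powr lam \<le> (KI powr p * (1 + cR) / real n) powr lam"
  proof (rule powr_mono2)
    have "1 \<le> KI powr p" using KI_ge_1 p by (intro ge_one_powr_ge_zero) auto
    hence "1 + KI powr p * cR \<le> KI powr p * (1 + cR)" by (simp add: algebra_simps)
    thus "A \<le> KI powr p * (1 + cR) / real n" using n_pos by (simp add: A_def divide_right_mono)
  qed (use lam A0 in auto)
  also have "(KI powr p * (1 + cR) / real n) powr lam = KI * (1 + cR) powr lam / real n powr lam"
    using KI_ge_1 cR lam n_pos by (simp add: powr_divide powr_mult powr_powr p_def)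
  finally show ?thesis using C0 by (simp add: mult_right_mono mult_ac)
qed

end

theorem theorem4p5:
  fixes R :: "real \<Rightarrow> real" and cR \<alpha> \<beta>0 \<beta>1 :: real and d n :: nat
    and I :: "nat set" and z :: "nat \<Rightarrow> int"
  assumes R_pos: "\<forall>x\<ge>1. R x > 0"
    and cR: "cR \<ge> 1"
    and R_scale: "\<forall>k m :: nat. k \<ge> 1 \<longrightarrow> m \<ge> 1 \<longrightarrow>
        R (real m) / cR \<le> R (real (k * m)) / real k \<and> R (real (k * m)) / real k \<le> R (real m)"
    and alpha: "\<alpha> \<ge> 0"
    and muR: "summable (\<lambda>m. R (real (Suc m)) powr (- 2 * \<alpha>))"
    and beta: "\<beta>0 > 0" "\<beta>1 > 0"
    and d: "d \<ge> 1"
    and I: "I \<subseteq> {1..d}"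
    and n: "prime n" "real n \<ge> cR"
    and z1: "z 1 \<in> {1..int n - 1}"
    and zCBC: "\<forall>l\<in>{2..d}. z l \<in> {0..<int n} \<and>
        (\<forall>w\<in>{0..<int n}. Bfun R \<alpha> \<beta>0 \<beta>1 I n l z \<le> Bfun R \<alpha> \<beta>0 \<beta>1 I n l (z(l := w)))"
  shows "\<exists>\<Delta> :: nat \<Rightarrow> real. (\<forall>i\<in>{1..d}. 0 \<le> \<Delta> i \<and> \<Delta> i < 1) \<and>
     (\<forall>lam::real. 1 \<le> lam \<and> lam < 2 * \<alpha> \<longrightarrow>
        (wce (SymSpace R \<alpha> \<beta>0 \<beta>1 d I) (Fnorm R \<alpha> \<beta>0 \<beta>1 d)
             (\<lambda>f. LINT x|cube_measure d. f x) (lattice_rule d n z \<Delta>))\<^sup>2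
        \<le> ereal ((1 + cR) powr lam * Cdl R \<alpha> \<beta>0 \<beta>1 d I lam * max 1 (real (card I))
                 / real n powr lam))"
proof -
  interpret cbc_setting R cR \<alpha> \<beta>0 \<beta>1 d n I z
    by unfold_locales (use assms in auto)
  obtain \<Delta>0 where "\<Delta>0 \<in> cube d" and G: "shift_bound \<Delta>0 \<le> lattice_sum"
    using exists_shift_bound_le by blast
  let ?\<Delta> = "\<lambda>i. frac (\<Delta>0 i)"
  have "(\<lambda>i. if i \<in> {1..d} then frac (real j * real_of_int (z i) / real n + ?\<Delta> i) else undefined)
      = (\<lambda>i. if i \<in> {1..d} then frac (real j * real_of_int (z i) / real n + \<Delta>0 i) else undefined)" for j
    by (intro ext) (simp only: frac_add_simps(2))
  hence rule_eq: "lattice_rule d n z ?\<Delta> = lattice_rule d n z \<Delta>0"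
    unfolding lattice_rule_def by presburger
  show ?thesis
  proof (rule exI[of _ ?\<Delta>], intro conjI ballI allI impI)
    show "0 \<le> ?\<Delta> i" "?\<Delta> i < 1" for i by (simp_all add: frac_lt_1)
    fix lam :: real assume lam: "1 \<le> lam \<and> lam < 2 * \<alpha>"
    let ?B = "(1 + cR) powr lam * Cdl R \<alpha> \<beta>0 \<beta>1 d I lam * max 1 (real (card I)) / real n powr lam"
    have SB: "lattice_sum \<le> ?B" using lattice_sum_le[of lam] lam by (simp add: KI_def)
    have "cmod ((LINT x|cube_measure d. f x) - lattice_rule d n z ?\<Delta> f) \<le> sqrt ?B"
      if "f \<in> SymSpace R \<alpha> \<beta>0 \<beta>1 d I" "Fnorm R \<alpha> \<beta>0 \<beta>1 d f \<le> 1" for f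
      using error_le_sqrt_shift_bound[OF that, of \<Delta>0] G SB unfolding rule_eq
      by (meson order_trans real_sqrt_le_mono)
    from wce_sq_le[OF this zero_in_SymSpace(1)] show "(wce (SymSpace R \<alpha> \<beta>0 \<beta>1 d I) (Fnorm R \<alpha> \<beta>0 \<beta>1 d)
        (\<lambda>f. LINT x|cube_measure d. f x) (lattice_rule d n z ?\<Delta>))\<^sup>2 \<le> ereal ?B"
      using lattice_sum_nonneg SB zero_in_SymSpace(2) by simp
  qed
qed

end
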